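(* Let $A\in\mathbb{R}^{d\times d}$, consider the sequence $\{x_k\}$ generated by $x_{k+1}=Ax_k$ for $k\ge 0$, and let $E$ be a linear subspace of $\mathbb{R}^d$. Then the following statements are equivalent: (1) $E$ is invariant under $A$ (i.e. $x\in E\Rightarrow Ax\in E$), and $E\supseteq E_{A,\ge 1}$, where $E_{A,\ge1}$ denotes the subspace spanned by all generalized eigenvectors of $A$ corresponding to eigenvalues with modulus greater than or equal to one. (2) There exist a seminorm $p$ with $\ker(p)=E$ and constants $\alpha,\beta>0$ such that $p(x_k)\le \alpha\, p(x_0)e^{-\beta k}$ for all $k\ge 0$ and all $x_0\in\mathbb{R}^d$. (3) For any seminorm $p$ with $\ker(p)=E$, there exist constants $\alpha,\beta>0$ such that $p(x_k)\le \alpha\, p(x_0)e^{-\beta k}$ for all $k\ge0$ and all $x_0\in\mathbb{R}^d$. (4) There exist matrices $P,Q\in\mathcal{S}^d_{+,E}$ satisfying $A^\top PA-P+Q=0$. (5) For any $Q\in\mathcal{S}^d_{+,E}$, there exists a unique $P\in\mathcal{S}^d_{+,E}$ satisfying $A^\top PA-P+Q=0$. Consequently, the smallest subspace $E$ for which any of these statements holds is $E=E_{A,\ge1}$.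
   Context: A seminorm on $\mathbb{R}^d$ is a function $p:\mathbb{R}^d\to[0,\infty)$ that is absolutely homogeneous and satisfies the triangle inequality; its kernel is $\ker(p)=\{x: p(x)=0\}$. $\mathcal{S}^d_{+,E}=\{B\in\mathbb{R}^{d\times d}: B \text{ symmetric positive semi-definite},\ \ker(B)=E\}$. *)

theory Defs
  imports "HOL-Analysis.Analysis"
begin

definition seminorm :: "(real^'n \<Rightarrow> real) \<Rightarrow> bool" where
  "seminorm p \<longleftrightarrow> (\<forall>x. p x \<ge> 0) \<and> (\<forall>c x. p (c *\<^sub>R x) = \<bar>c\<bar> * p x)
     \<and> (\<forall>x y. p (x + y) \<le> p x + p y)"

definition seminorm_ker :: "(real^'n \<Rightarrow> real) \<Rightarrow> (real^'n) set" where
  "seminorm_ker p = {x. p x = 0}"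

definition psd_ker :: "(real^'n) set \<Rightarrow> (real^'n^'n) set" where
  "psd_ker E = {B. transpose B = B \<and> (\<forall>x. x \<bullet> (B *v x) \<ge> 0) \<and> {x. B *v x = 0} = E}"

definition cmat :: "real^'n^'n \<Rightarrow> complex^'n^'n" where
  "cmat A = (\<chi> i j. complex_of_real (A $ i $ j))"

definition cvec :: "real^'n \<Rightarrow> complex^'n" where
  "cvec x = (\<chi> i. complex_of_real (x $ i))"

definition gen_eigenvector :: "real^'n^'n \<Rightarrow> complex \<Rightarrow> complex^'n \<Rightarrow> bool" where
  "gen_eigenvector A l v \<longleftrightarrow> v \<noteq> 0 \<and>
     (\<exists>k::nat. ((\<lambda>w. (cmat A - (\<chi> i j. if i = j then l else 0)) *v w) ^^ k) v = 0)"

definition E_ge1 :: "real^'n^'n \<Rightarrow> (real^'n) set" where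
  "E_ge1 A = {x. cvec x \<in> vec.span {v. \<exists>l. cmod l \<ge> 1 \<and> gen_eigenvector A l v}}"

definition orbit :: "real^'n^'n \<Rightarrow> real^'n \<Rightarrow> nat \<Rightarrow> real^'n" where
  "orbit A x0 k = (((*v) A) ^^ k) x0"

definition cond1 :: "real^'n^'n \<Rightarrow> (real^'n) set \<Rightarrow> bool" where
  "cond1 A E \<longleftrightarrow> (\<forall>x\<in>E. A *v x \<in> E) \<and> E_ge1 A \<subseteq> E"

definition cond2 :: "real^'n^'n \<Rightarrow> (real^'n) set \<Rightarrow> bool" where
  "cond2 A E \<longleftrightarrow> (\<exists>p. seminorm p \<and> seminorm_ker p = E \<and>
     (\<exists>\<alpha> \<beta>. \<alpha> > 0 \<and> \<beta> > 0 \<and>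
        (\<forall>k x0. p (orbit A x0 k) \<le> \<alpha> * p x0 * exp (- \<beta> * real k))))"

definition cond3 :: "real^'n^'n \<Rightarrow> (real^'n) set \<Rightarrow> bool" where
  "cond3 A E \<longleftrightarrow> (\<forall>p. seminorm p \<and> seminorm_ker p = E \<longrightarrow>
     (\<exists>\<alpha> \<beta>. \<alpha> > 0 \<and> \<beta> > 0 \<and>
        (\<forall>k x0. p (orbit A x0 k) \<le> \<alpha> * p x0 * exp (- \<beta> * real k))))"

definition cond4 :: "real^'n^'n \<Rightarrow> (real^'n) set \<Rightarrow> bool" where
  "cond4 A E \<longleftrightarrow> (\<exists>P\<in>psd_ker E. \<exists>Q\<in>psd_ker E. transpose A ** P ** A - P + Q = 0)"

definition cond5 :: "real^'n^'n \<Rightarrow> (real^'n) set \<Rightarrow> bool" where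
  "cond5 A E \<longleftrightarrow> (\<forall>Q\<in>psd_ker E. \<exists>!P. P \<in> psd_ker E \<and> transpose A ** P ** A - P + Q = 0)"

end

theory Submission
  imports Defs "HOL-Computational_Algebra.Polynomial_Factorial"
    "HOL-Computational_Algebra.Fundamental_Theorem_Algebra" "HOL-Computational_Algebra.Field_as_Ring"
begin

text \<open>Let \<open>Pr\<close> be the orthogonal projection onto the orthogonal complement of \<open>E\<close>, so that
  \<open>ker Pr = E\<close>. All seminorms with kernel \<open>E\<close> are equivalent (compactness of the unit sphere in
  the range of \<open>Pr\<close>), so each condition amounts to exponential decay of \<open>\<parallel>Pr x\<^sub>k\<parallel>\<close>.
  If \<open>P, Q\<close> solve the Lyapunov equation, \<open>x \<bullet> P x\<close> shrinks by a fixed factor at every step;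
  conversely, under decay \<open>\<Sum>\<^sub>k (A\<^sup>k)\<^sup>T Q A\<^sup>k\<close> converges to a solution, which is unique since the
  difference of two solutions is an \<open>A\<close>-invariant form that decays. Decay makes \<open>E\<close> invariant,
  and a generalized eigenvector for \<open>\<bar>\<lambda>\<bar> \<ge> 1\<close> outside \<open>E\<close> would have a component modulo \<open>E\<close>
  that does not decay. Conversely, factoring an annihilating polynomial splits every vector into
  generalized eigenvectors for \<open>\<bar>\<lambda>\<bar> \<ge> 1\<close>, which lie in \<open>E\<close>, and a part whose orbit tends to
  zero. The resulting convergence of \<open>Pr x\<^sub>k\<close> is uniform on a basis, so some power of \<open>A\<close> halves
  \<open>\<parallel>Pr x\<parallel>\<close>, which gives exponential decay.\<close>

section \<open>Seminorms\<close>

lemma seminorm_nonneg: "seminorm p \<Longrightarrow> 0 \<le> p x"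
  unfolding seminorm_def by auto

lemma seminorm_scaleR: "seminorm p \<Longrightarrow> p (c *\<^sub>R x) = \<bar>c\<bar> * p x"
  unfolding seminorm_def by auto

lemma seminorm_triangle: "seminorm p \<Longrightarrow> p (x + y) \<le> p x + p y"
  unfolding seminorm_def by auto

lemma seminorm_zero: "seminorm p \<Longrightarrow> p 0 = 0"
  using seminorm_scaleR[of p 0 0] by simp

lemma seminorm_minus: "seminorm p \<Longrightarrow> p (- x) = p x"
  using seminorm_scaleR[of p "-1" x] by simp

lemma seminorm_diff_le: "seminorm p \<Longrightarrow> p x - p y \<le> p (x - y)"
  using seminorm_triangle[of p y "x - y"] by simp

lemma seminorm_sum: "seminorm p \<Longrightarrow> p (sum f S) \<le> (\<Sum>i\<in>S. p (f i))"
proof (induction S rule: infinite_finite_induct)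
  case (insert x F)
  then show ?case using seminorm_triangle[OF insert.prems, of "f x" "sum f F"] by simp
qed (simp_all add: seminorm_zero)

lemma seminorm_le_norm:
  fixes p :: "real^'n \<Rightarrow> real"
  assumes "seminorm p"
  obtains K where "K \<ge> 0" "\<And>x. p x \<le> K * norm x"
proof
  define K where "K = (\<Sum>i\<in>UNIV. p (axis i 1))"
  show "K \<ge> 0" unfolding K_def using seminorm_nonneg[OF assms] by (simp add: sum_nonneg)
  fix x :: "real^'n"
  have "p x = p (\<Sum>i\<in>UNIV. x $ i *\<^sub>R axis i 1)"
    using basis_expansion[of x] by (simp add: scalar_mult_eq_scaleR)
  also have "\<dots> \<le> (\<Sum>i\<in>UNIV. p (x $ i *\<^sub>R axis i 1))" by (rule seminorm_sum[OF assms])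
  also have "\<dots> = (\<Sum>i\<in>UNIV. \<bar>x $ i\<bar> * p (axis i 1))" by (simp add: seminorm_scaleR[OF assms])
  also have "\<dots> \<le> (\<Sum>i\<in>UNIV. norm x * p (axis i 1))"
    by (intro sum_mono mult_right_mono) (auto simp: component_le_norm_cart seminorm_nonneg[OF assms])
  also have "\<dots> = K * norm x" unfolding K_def by (simp add: sum_distrib_left mult.commute)
  finally show "p x \<le> K * norm x" .
qed

lemma seminorm_continuous_on:
  fixes p :: "real^'n \<Rightarrow> real"
  assumes "seminorm p"
  shows "continuous_on S p"
proof -
  obtain K where K: "K \<ge> 0" "\<And>x. p x \<le> K * norm x" using seminorm_le_norm[OF assms] by blast
  have "K-lipschitz_on S p"
  proof (rule lipschitz_onI)
    fix x y
    have "p x - p y \<le> K * norm (x - y)" "p y - p x \<le> K * norm (x - y)"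
      using seminorm_diff_le[OF assms, of x y] seminorm_diff_le[OF assms, of y x] K(2)[of "x - y"]
        K(2)[of "y - x"] by (auto simp: norm_minus_commute)
    then show "dist (p x) (p y) \<le> K * dist x y" by (simp add: dist_norm abs_le_iff)
  qed (fact K(1))
  then show ?thesis by (rule lipschitz_on_continuous_on)
qed

lemma seminorm_ker_subspace:
  assumes "seminorm p"
  shows "subspace (seminorm_ker p)"
  unfolding subspace_def seminorm_ker_def
proof (intro conjI ballI allI)
  fix x y assume "x \<in> {x. p x = 0}" "y \<in> {x. p x = 0}"
  then show "x + y \<in> {x. p x = 0}"
    using seminorm_triangle[OF assms, of x y] seminorm_nonneg[OF assms, of "x + y"] by simp
qed (simp_all add: seminorm_zero[OF assms] seminorm_scaleR[OF assms])

lemma seminorm_eq_if_diff_in_ker: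
  assumes "seminorm p" "x - y \<in> seminorm_ker p"
  shows "p x = p y"
  using seminorm_diff_le[OF assms(1), of x y] seminorm_diff_le[OF assms(1), of y x]
    seminorm_minus[OF assms(1), of "x - y"] assms(2)
  unfolding seminorm_ker_def by simp

lemma seminorm_norm_matrix: "seminorm (\<lambda>x. norm (M *v x))"
  unfolding seminorm_def
  by (auto simp: matrix_vector_mult_scaleR matrix_vector_right_distrib norm_triangle_ineq)

lemma seminorm_ker_norm_matrix: "seminorm_ker (\<lambda>x. norm (M *v x)) = {x. M *v x = 0}"
  unfolding seminorm_ker_def by simp

section \<open>The orthogonal projection onto the complement of a subspace\<close>

lemma matrix_eqI_forms:
  fixes M N :: "real^'n^'m"
  assumes "\<And>x y. x \<bullet> (M *v y) = x \<bullet> (N *v y)"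
  shows "M = N"
proof -
  have "M *v y = N *v y" for y using assms vector_eq_ldot by blast
  then show ?thesis by (simp add: matrix_eq)
qed

lemma inner_transpose: "x \<bullet> (transpose M *v y) = (M *v x) \<bullet> y" for M :: "real^'n^'m"
proof -
  have "x \<bullet> (transpose M *v y) = (y v* M) \<bullet> x"
    by (simp only: inner_commute[of x] transpose_matrix_vector)
  also have "\<dots> = (M *v x) \<bullet> y" by (simp only: dot_lmul_matrix inner_commute[of y])
  finally show ?thesis .
qed

locale perp_projector =
  fixes E :: "(real^'n) set" and Pr :: "real^'n^'n"
  assumes proj_eq_0_iff: "Pr *v x = 0 \<longleftrightarrow> x \<in> E"
    and transpose_proj: "transpose Pr = Pr"
    and proj_idem: "Pr *v (Pr *v x) = Pr *v x"

lemma perp_decomposition_unique: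
  fixes E :: "(real^'n) set"
  assumes E: "subspace E"
  shows "\<exists>!z. z \<in> E\<^sup>\<bottom> \<and> x - z \<in> E"
proof (rule ex_ex1I)
  have "x \<in> E + E\<^sup>\<bottom>" using subspace_sum_orthogonal_comp[OF E] by simp
  then obtain y z where "x = y + z" "y \<in> E" "z \<in> E\<^sup>\<bottom>" by (rule set_plus_elim)
  then show "\<exists>z. z \<in> E\<^sup>\<bottom> \<and> x - z \<in> E" by auto
next
  fix z z' assume z: "z \<in> E\<^sup>\<bottom> \<and> x - z \<in> E" and z': "z' \<in> E\<^sup>\<bottom> \<and> x - z' \<in> E"
  have "(x - z') - (x - z) \<in> E" using subspace_diff[OF E, of "x - z'" "x - z"] z z' by blast
  moreover have "z - z' \<in> E\<^sup>\<bottom>" using subspace_diff[OF subspace_orthogonal_comp, of z E z'] z z' by blast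
  ultimately have "z - z' \<in> E \<inter> E\<^sup>\<bottom>" by simp
  then show "z = z'" unfolding orthogonal_Int_0[OF E] by simp
qed

definition perp_component :: "(real^'n) set \<Rightarrow> real^'n \<Rightarrow> real^'n" where
  "perp_component E x = (THE z. z \<in> E\<^sup>\<bottom> \<and> x - z \<in> E)"

context
  fixes E :: "(real^'n) set"
  assumes E: "subspace E"
begin

lemma perp_component: "perp_component E x \<in> E\<^sup>\<bottom>" "x - perp_component E x \<in> E"
  using theI'[OF perp_decomposition_unique[OF E]] unfolding perp_component_def by blast+

lemma perp_component_eqI: "z \<in> E\<^sup>\<bottom> \<Longrightarrow> x - z \<in> E \<Longrightarrow> perp_component E x = z"
  unfolding perp_component_def using perp_decomposition_unique[OF E] by (blast intro: the1_equality)

lemma linear_perp_component: "linear (perp_component E)"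
proof (rule linearI)
  fix x y
  have "perp_component E x + perp_component E y \<in> E\<^sup>\<bottom>"
    using subspace_add[OF subspace_orthogonal_comp perp_component(1) perp_component(1)] .
  moreover have "x + y - (perp_component E x + perp_component E y) \<in> E"
    using subspace_add[OF E perp_component(2)[of x] perp_component(2)[of y]] by (simp add: algebra_simps)
  ultimately show "perp_component E (x + y) = perp_component E x + perp_component E y"
    by (rule perp_component_eqI)
next
  fix c :: real and x
  have "c *\<^sub>R perp_component E x \<in> E\<^sup>\<bottom>"
    using subspace_scale[OF subspace_orthogonal_comp perp_component(1)] .
  moreover have "c *\<^sub>R x - c *\<^sub>R perp_component E x \<in> E"
    using subspace_scale[OF E perp_component(2)[of x], of c] by (simp add: scaleR_diff_right)
  ultimately show "perp_component E (c *\<^sub>R x) = c *\<^sub>R perp_component E x" by (rule perp_component_eqI)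
qed

lemma inner_perp_component: "x \<bullet> perp_component E y = perp_component E x \<bullet> perp_component E y"
proof -
  have "(x - perp_component E x) \<bullet> perp_component E y = 0"
    using perp_component(2)[of x] perp_component(1)[of y] by (auto simp: orthogonal_comp_def orthogonal_def)
  then show ?thesis by (simp add: inner_diff_left)
qed

lemma perp_projector_matrix: "perp_projector E (matrix (perp_component E))"
proof
  have Pr: "matrix (perp_component E) *v x = perp_component E x" for x
    using linear_perp_component by (simp add: matrix_works)
  show "matrix (perp_component E) *v x = 0 \<longleftrightarrow> x \<in> E" for x
    using perp_component[of x] perp_component_eqI[of 0 x]
    by (auto simp: Pr subspace_0[OF E] subspace_0[OF subspace_orthogonal_comp])
  show "matrix (perp_component E) *v (matrix (perp_component E) *v x) = matrix (perp_component E) *v x" for x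
    unfolding Pr by (rule perp_component_eqI) (simp_all add: perp_component(1) subspace_0[OF E])
  show "transpose (matrix (perp_component E)) = matrix (perp_component E)"
  proof (rule matrix_eqI_forms)
    fix x y
    have "x \<bullet> (transpose (matrix (perp_component E)) *v y) = perp_component E x \<bullet> y"
      by (simp only: inner_transpose Pr)
    also have "\<dots> = x \<bullet> perp_component E y"
      using inner_perp_component[of x y] inner_perp_component[of y x] by (simp add: inner_commute)
    finally show "x \<bullet> (transpose (matrix (perp_component E)) *v y) = x \<bullet> (matrix (perp_component E) *v y)"
      by (simp only: Pr)
  qed
qed

end

lemma perp_projector_exists:
  fixes E :: "(real^'n) set"
  assumes "subspace E"
  obtains Pr where "perp_projector E Pr"
  using perp_projector_matrix[OF assms] by (rule that)

context perp_projector
begin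

lemma diff_proj_in_E: "x - Pr *v x \<in> E"
  using proj_eq_0_iff[of "x - Pr *v x"] proj_idem[of x] by (simp add: matrix_vector_mult_diff_distrib)

lemma seminorm_proj:
  assumes "seminorm p" "seminorm_ker p = E"
  shows "p (Pr *v x) = p x"
  using seminorm_eq_if_diff_in_ker[OF assms(1), of x "Pr *v x"] diff_proj_in_E assms(2) by simp

lemma seminorm_ker_norm_proj: "seminorm_ker (\<lambda>x. norm (Pr *v x)) = E"
  by (simp add: seminorm_ker_norm_matrix proj_eq_0_iff)

lemma proj_in_psd_ker: "Pr \<in> psd_ker E"
proof -
  have "x \<bullet> (Pr *v x) = (Pr *v x) \<bullet> (Pr *v x)" for x
    using inner_transpose[of x Pr "Pr *v x"] by (simp add: transpose_proj proj_idem)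
  then show ?thesis unfolding psd_ker_def using transpose_proj proj_eq_0_iff by auto
qed

lemma proj_norm_le_seminorm:
  assumes p: "seminorm p" "seminorm_ker p = E"
  obtains c where "c > 0" "\<And>x. c * norm (Pr *v x) \<le> p x"
proof -
  define S where "S = {y. Pr *v y = y \<and> norm y = 1}"
  have lower: "c * norm (Pr *v x) \<le> p x" if "\<forall>y\<in>S. c \<le> p y" for x c
  proof (cases "Pr *v x = 0")
    case True then show ?thesis using seminorm_nonneg[OF p(1)] by simp
  next
    case False
    define y where "y = (1 / norm (Pr *v x)) *\<^sub>R (Pr *v x)"
    have "y \<in> S" using False unfolding S_def y_def by (simp add: matrix_vector_mult_scaleR proj_idem)
    have "p x = p (norm (Pr *v x) *\<^sub>R y)" using False seminorm_proj[OF p] by (simp add: y_def)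
    also have "\<dots> = norm (Pr *v x) * p y" by (simp add: seminorm_scaleR[OF p(1)])
    finally show ?thesis using that \<open>y \<in> S\<close> by (simp add: mult.commute[of c] mult_left_mono)
  qed
  show ?thesis
  proof (cases "S = {}")
    case True
    then show ?thesis using that[of 1] lower[of 1] by auto
  next
    case False
    have "closed S"
    proof -
      have "S = {y. Pr *v y = y} \<inter> {y. norm y = 1}" unfolding S_def by auto
      moreover have "closed {y. Pr *v y = y}"
        by (intro closed_Collect_eq linear_continuous_on continuous_on_id matrix_vector_mul_bounded_linear)
      moreover have "closed {y::real^'n. norm y = 1}"
        by (intro closed_Collect_eq continuous_intros)
      ultimately show ?thesis by auto
    qed
    moreover have "bounded S" unfolding S_def bounded_iff by auto
    ultimately obtain y0 where y0: "y0 \<in> S" "\<And>y. y \<in> S \<Longrightarrow> p y0 \<le> p y"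
      using continuous_attains_inf[OF _ False seminorm_continuous_on[OF p(1)]]
      by (metis compact_eq_bounded_closed)
    have "p y0 \<noteq> 0"
      using y0(1) p(2) proj_eq_0_iff[of y0] unfolding S_def seminorm_ker_def by auto
    then have "p y0 > 0" using seminorm_nonneg[OF p(1), of y0] by simp
    then show ?thesis using that[of "p y0"] lower[of "p y0"] y0(2) by blast
  qed
qed

lemma seminorm_le_norm_proj:
  assumes p: "seminorm p" "seminorm_ker p = E"
  obtains C where "C > 0" "\<And>x. p x \<le> C * norm (Pr *v x)"
proof -
  obtain K where K: "K \<ge> 0" "\<And>x. p x \<le> K * norm x" using seminorm_le_norm[OF p(1)] by blast
  have "p x \<le> (K + 1) * norm (Pr *v x)" for x
    using K(2)[of "Pr *v x"] seminorm_proj[OF p, of x] by (simp add: distrib_right add_increasing2)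
  then show ?thesis using that[of "K + 1"] K(1) by simp
qed

end

lemma seminorms_same_ker_le:
  fixes p q :: "real^'n \<Rightarrow> real"
  assumes p: "seminorm p" and q: "seminorm q" and ker: "seminorm_ker p = seminorm_ker q"
  obtains C where "C > 0" "\<And>x. p x \<le> C * q x"
proof -
  obtain Pr where "perp_projector (seminorm_ker q) Pr"
    using perp_projector_exists[OF seminorm_ker_subspace[OF q]] by blast
  then interpret perp_projector "seminorm_ker q" Pr .
  obtain C where C: "C > 0" "\<And>x. p x \<le> C * norm (Pr *v x)" using seminorm_le_norm_proj[OF p ker] by blast
  obtain c where c: "c > 0" "\<And>x. c * norm (Pr *v x) \<le> q x" using proj_norm_le_seminorm[OF q refl] by blast
  have "p x \<le> C / c * q x" for x
  proof -
    have "p x \<le> C * norm (Pr *v x)" by (fact C(2))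
    also have "\<dots> \<le> C * (q x / c)" using c C(1) by (simp add: mult_left_mono pos_le_divide_eq mult.commute)
    finally show ?thesis by simp
  qed
  then show ?thesis using that[of "C / c"] C(1) c(1) by simp
qed

section \<open>Orbits and exponential decay\<close>

lemma orbit_0 [simp]: "orbit A x 0 = x"
  by (simp add: orbit_def)

lemma orbit_Suc: "orbit A x (Suc k) = A *v orbit A x k"
  by (simp add: orbit_def)

lemma orbit_Suc_right: "orbit A x (Suc k) = orbit A (A *v x) k"
  by (simp add: orbit_def funpow_Suc_right del: funpow.simps)

lemma orbit_add_steps: "orbit A x (j + k) = orbit A (orbit A x k) j"
  by (simp add: orbit_def funpow_add)

lemma linear_orbit: "linear (\<lambda>x. orbit A x k)"
proof (induction k)
  case (Suc k)
  then show ?case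
    unfolding orbit_Suc by (intro linear_compose[unfolded o_def, OF Suc] matrix_vector_mul_linear)
qed (simp add: linear_id[unfolded id_def])

lemma orbit_add: "orbit A (x + y) k = orbit A x k + orbit A y k"
  by (rule linear_add[OF linear_orbit])

lemma orbit_diff: "orbit A (x - y) k = orbit A x k - orbit A y k"
  by (rule linear_diff[OF linear_orbit])

lemma orbit_invariant: "(\<forall>x\<in>E. A *v x \<in> E) \<Longrightarrow> x \<in> E \<Longrightarrow> orbit A x k \<in> E"
  by (induction k) (simp_all add: orbit_Suc)

definition decays_exponentially :: "(real^'n \<Rightarrow> real) \<Rightarrow> real^'n^'n \<Rightarrow> bool" where
  "decays_exponentially p A \<longleftrightarrow> (\<exists>\<alpha> \<beta>. \<alpha> > 0 \<and> \<beta> > 0 \<and>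
     (\<forall>k x0. p (orbit A x0 k) \<le> \<alpha> * p x0 * exp (- \<beta> * real k)))"

lemma cond2_iff_decays:
  "cond2 A E \<longleftrightarrow> (\<exists>p. seminorm p \<and> seminorm_ker p = E \<and> decays_exponentially p A)"
  unfolding cond2_def decays_exponentially_def ..

lemma cond3_iff_decays:
  "cond3 A E \<longleftrightarrow> (\<forall>p. seminorm p \<and> seminorm_ker p = E \<longrightarrow> decays_exponentially p A)"
  unfolding cond3_def decays_exponentially_def ..

lemma exp_minus_mult_nat: "exp (- \<beta> * real k) = exp (- \<beta>) ^ k"
  by (metis exp_of_nat_mult mult.commute)

lemma decays_exponentiallyE_geometric:
  assumes "decays_exponentially p A"
  obtains C r where "C > 0" "0 \<le> r" "r < 1" "\<And>k x. p (orbit A x k) \<le> C * p x * r ^ k"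
proof -
  obtain \<alpha> \<beta> where "\<alpha> > 0" "\<beta> > 0" "\<And>k x. p (orbit A x k) \<le> \<alpha> * p x * exp (- \<beta>) ^ k"
    using assms unfolding decays_exponentially_def exp_minus_mult_nat by blast
  then show thesis using that[of \<alpha> "exp (- \<beta>)"] by simp
qed

lemma decays_exponentiallyI_geometric:
  assumes nonneg: "\<And>x. 0 \<le> p x" and r: "0 \<le> r" "r < 1"
    and bound: "\<And>k x. p (orbit A x k) \<le> C * p x * r ^ k"
  shows "decays_exponentially p A"
proof -
  define \<rho> where "\<rho> = max r (1/2)"
  have \<rho>: "0 < \<rho>" "\<rho> < 1" "r \<le> \<rho>" using r by (auto simp: \<rho>_def)
  have "p (orbit A x k) \<le> max C 1 * p x * exp (- (- ln \<rho>) * real k)" for k x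
  proof -
    have "p (orbit A x k) \<le> C * p x * r ^ k" by (fact bound)
    also have "\<dots> \<le> max C 1 * p x * \<rho> ^ k"
      using nonneg[of x] r \<rho> by (intro mult_mono mult_right_mono power_mono) auto
    also have "\<rho> ^ k = exp (- (- ln \<rho>) * real k)"
      using \<rho> by (simp add: mult.commute[of "ln \<rho>"] exp_of_nat_mult)
    finally show ?thesis .
  qed
  moreover have "- ln \<rho> > 0" using \<rho> by simp
  ultimately show ?thesis unfolding decays_exponentially_def
    by (intro exI[of _ "max C 1"] exI[of _ "- ln \<rho>"]) auto
qed

lemma decays_exponentially_if_contraction:
  assumes nonneg: "\<And>x. 0 \<le> p x" and r: "0 \<le> r" "r < 1"
    and contr: "\<And>x. p (A *v x) \<le> r * p x"
  shows "decays_exponentially p A"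
proof (rule decays_exponentiallyI_geometric[OF nonneg r])
  show "p (orbit A x k) \<le> 1 * p x * r ^ k" for k x
  proof (induction k)
    case (Suc k)
    have "p (orbit A x (Suc k)) \<le> r * p (orbit A x k)" unfolding orbit_Suc by (fact contr)
    also have "\<dots> \<le> r * (1 * p x * r ^ k)" using Suc r by (intro mult_left_mono) auto
    finally show ?case by (simp add: mult_ac)
  qed simp
qed

lemma decays_exponentially_same_ker:
  assumes p: "seminorm p" and q: "seminorm q" and ker: "seminorm_ker p = seminorm_ker q"
    and decay: "decays_exponentially p A"
  shows "decays_exponentially q A"
proof -
  obtain \<alpha> \<beta> where \<alpha>\<beta>: "\<alpha> > 0" "\<beta> > 0"
    "\<And>k x. p (orbit A x k) \<le> \<alpha> * p x * exp (- \<beta> * real k)"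
    using decay unfolding decays_exponentially_def by blast
  obtain a where a: "a > 0" "\<And>x. q x \<le> a * p x" using seminorms_same_ker_le[OF q p ker[symmetric]] by blast
  obtain b where b: "b > 0" "\<And>x. p x \<le> b * q x" using seminorms_same_ker_le[OF p q ker] by blast
  have "q (orbit A x k) \<le> (a * \<alpha> * b) * q x * exp (- \<beta> * real k)" for k x
  proof -
    have "q (orbit A x k) \<le> a * (\<alpha> * p x * exp (- \<beta> * real k))"
      using a \<alpha>\<beta>(3)[of x k] by (meson mult_left_mono order.trans less_imp_le)
    also have "\<dots> \<le> a * (\<alpha> * (b * q x) * exp (- \<beta> * real k))"
      using a \<alpha>\<beta> b(2)[of x] by (intro mult_left_mono mult_right_mono) auto
    finally show ?thesis by (simp add: mult_ac)
  qed
  then show ?thesis unfolding decays_exponentially_def using a b \<alpha>\<beta>(1,2)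
    by (intro exI[of _ "a * \<alpha> * b"] exI[of _ \<beta>]) auto
qed

lemma decays_exponentially_imp_invariant:
  assumes p: "seminorm p" and decay: "decays_exponentially p A" and x: "x \<in> seminorm_ker p"
  shows "A *v x \<in> seminorm_ker p"
proof -
  obtain \<alpha> \<beta> where "\<And>k x. p (orbit A x k) \<le> \<alpha> * p x * exp (- \<beta> * real k)"
    using decay unfolding decays_exponentially_def by blast
  from this[of x 1] have "p (A *v x) \<le> 0" using x unfolding seminorm_ker_def by (simp add: orbit_def)
  then show ?thesis using seminorm_nonneg[OF p, of "A *v x"] unfolding seminorm_ker_def by simp
qed

section \<open>Positive semidefinite forms and the Lyapunov equation\<close>

lemma psd_kerD:
  assumes "P \<in> psd_ker E"
  shows "transpose P = P" "\<And>x. 0 \<le> x \<bullet> (P *v x)" "\<And>x. P *v x = 0 \<longleftrightarrow> x \<in> E"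
  using assms unfolding psd_ker_def by auto

lemma inner_symmetric_matrix: "transpose P = P \<Longrightarrow> x \<bullet> (P *v y) = y \<bullet> (P *v x)" for P :: "real^'n^'n"
  by (metis inner_transpose inner_commute)

lemma discriminant_nonpos_if_nonneg:
  fixes a b c :: real
  assumes nonneg: "\<And>t. 0 \<le> a + 2 * t * b + t\<^sup>2 * c" and "0 \<le> c"
  shows "b\<^sup>2 \<le> a * c"
proof (cases "c = 0")
  case True
  have "b = 0"
  proof (rule ccontr)
    assume "b \<noteq> 0"
    have "0 \<le> a + 2 * (- (a + 1) / (2 * b)) * b + (- (a + 1) / (2 * b))\<^sup>2 * c" by (rule nonneg)
    also have "\<dots> = -1" using \<open>b \<noteq> 0\<close> True by (simp add: field_simps)
    finally show False by simp
  qed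
  then show ?thesis using True by simp
next
  case False
  then have "c > 0" using \<open>0 \<le> c\<close> by simp
  have "0 \<le> a + 2 * (- b / c) * b + (- b / c)\<^sup>2 * c" by (rule nonneg)
  also have "\<dots> = (a * c - b\<^sup>2) / c" using \<open>c > 0\<close> by (simp add: field_simps power2_eq_square)
  finally show ?thesis using \<open>c > 0\<close> by (simp add: zero_le_divide_iff)
qed

lemma psd_Cauchy_Schwarz:
  fixes P :: "real^'n^'n"
  assumes sym: "transpose P = P" and nonneg: "\<And>x. 0 \<le> x \<bullet> (P *v x)"
  shows "\<bar>x \<bullet> (P *v y)\<bar> \<le> sqrt (x \<bullet> (P *v x)) * sqrt (y \<bullet> (P *v y))"
proof -
  have "(x \<bullet> (P *v y))\<^sup>2 \<le> (x \<bullet> (P *v x)) * (y \<bullet> (P *v y))"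
  proof (rule discriminant_nonpos_if_nonneg)
    fix t :: real
    have "(x + t *\<^sub>R y) \<bullet> (P *v (x + t *\<^sub>R y)) =
          x \<bullet> (P *v x) + t * (x \<bullet> (P *v y)) + t * (y \<bullet> (P *v x)) + t * t * (y \<bullet> (P *v y))"
      by (simp add: matrix_vector_right_distrib matrix_vector_mult_scaleR inner_add_left
          inner_add_right algebra_simps)
    also have "\<dots> = x \<bullet> (P *v x) + 2 * t * (x \<bullet> (P *v y)) + t\<^sup>2 * (y \<bullet> (P *v y))"
      using inner_symmetric_matrix[OF sym, of y x] by (simp add: power2_eq_square algebra_simps)
    finally show "0 \<le> x \<bullet> (P *v x) + 2 * t * (x \<bullet> (P *v y)) + t\<^sup>2 * (y \<bullet> (P *v y))"
      using nonneg[of "x + t *\<^sub>R y"] by simp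
  qed (fact nonneg)
  then show ?thesis by (metis real_sqrt_abs real_sqrt_le_mono real_sqrt_mult)
qed

lemma psd_eq_0_if_form_eq_0:
  fixes P :: "real^'n^'n"
  assumes sym: "transpose P = P" and nonneg: "\<And>x. 0 \<le> x \<bullet> (P *v x)" and "x \<bullet> (P *v x) = 0"
  shows "P *v x = 0"
proof -
  have "\<bar>(P *v x) \<bullet> (P *v x)\<bar> \<le> 0"
    using psd_Cauchy_Schwarz[OF sym nonneg, of "P *v x" x] \<open>x \<bullet> (P *v x) = 0\<close>
    by (simp add: inner_symmetric_matrix[OF sym, of "P *v x" x])
  then show ?thesis by (metis abs_le_zero_iff inner_eq_zero_iff)
qed

lemma seminorm_sqrt_psd:
  fixes P :: "real^'n^'n"
  assumes "P \<in> psd_ker E"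
  shows "seminorm (\<lambda>x. sqrt (x \<bullet> (P *v x)))"
  unfolding seminorm_def
proof (intro conjI allI)
  note P = psd_kerD[OF assms]
  fix x y :: "real^'n" and c :: real
  show "0 \<le> sqrt (x \<bullet> (P *v x))" using P(2) by simp
  have "(c *\<^sub>R x) \<bullet> (P *v (c *\<^sub>R x)) = c\<^sup>2 * (x \<bullet> (P *v x))"
    by (simp add: matrix_vector_mult_scaleR power2_eq_square)
  then show "sqrt ((c *\<^sub>R x) \<bullet> (P *v (c *\<^sub>R x))) = \<bar>c\<bar> * sqrt (x \<bullet> (P *v x))"
    by (simp add: real_sqrt_mult)
  define a b where "a = sqrt (x \<bullet> (P *v x))" and "b = sqrt (y \<bullet> (P *v y))"
  have "(x + y) \<bullet> (P *v (x + y)) = a\<^sup>2 + 2 * (x \<bullet> (P *v y)) + b\<^sup>2"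
    using inner_symmetric_matrix[OF P(1), of y x] P(2)[of x] P(2)[of y] unfolding a_def b_def
    by (simp add: matrix_vector_right_distrib inner_add_left inner_add_right)
  also have "\<dots> \<le> (a + b)\<^sup>2"
    using psd_Cauchy_Schwarz[OF P(1,2), of x y] unfolding a_def b_def by (simp add: power2_sum)
  finally have "(x + y) \<bullet> (P *v (x + y)) \<le> (a + b)\<^sup>2" .
  moreover have "0 \<le> a + b" unfolding a_def b_def using P(2)[of x] P(2)[of y] by simp
  ultimately show "sqrt ((x + y) \<bullet> (P *v (x + y))) \<le> sqrt (x \<bullet> (P *v x)) + sqrt (y \<bullet> (P *v y))"
    unfolding a_def b_def by (simp add: real_le_lsqrt)
qed

lemma seminorm_ker_sqrt_psd:
  assumes "P \<in> psd_ker E"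
  shows "seminorm_ker (\<lambda>x. sqrt (x \<bullet> (P *v x))) = E"
proof -
  have "sqrt (x \<bullet> (P *v x)) = 0 \<longleftrightarrow> P *v x = 0" for x
    using psd_eq_0_if_form_eq_0[OF psd_kerD(1,2)[OF assms]] by auto
  then show ?thesis unfolding seminorm_ker_def using psd_kerD(3)[OF assms] by auto
qed

lemma inner_congruence: "x \<bullet> ((transpose A ** P ** A) *v y) = (A *v x) \<bullet> (P *v (A *v y))"
  for A P :: "real^'n^'n"
proof -
  have "(transpose A ** P ** A) *v y = transpose A *v (P *v (A *v y))"
    by (simp add: matrix_vector_mul_assoc matrix_mul_assoc)
  then show ?thesis by (simp only: inner_transpose)
qed

lemma lyapunov_form:
  fixes A P Q :: "real^'n^'n"
  assumes "transpose A ** P ** A - P + Q = 0"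
  shows "(A *v x) \<bullet> (P *v (A *v y)) = x \<bullet> (P *v y) - x \<bullet> (Q *v y)"
proof -
  have "x \<bullet> ((transpose A ** P ** A - P + Q) *v y) = 0" using assms by simp
  then show ?thesis
    by (simp add: inner_congruence matrix_vector_mult_add_rdistrib matrix_vector_mult_diff_rdistrib
        inner_add_right inner_diff_right)
qed

lemma lyapunov_imp_decays:
  fixes A P Q :: "real^'n^'n"
  assumes P: "P \<in> psd_ker E" and Q: "Q \<in> psd_ker E" and eq: "transpose A ** P ** A - P + Q = 0"
  shows "decays_exponentially (\<lambda>x. sqrt (x \<bullet> (P *v x))) A"
proof -
  have "seminorm_ker (\<lambda>x. sqrt (x \<bullet> (P *v x))) = seminorm_ker (\<lambda>x. sqrt (x \<bullet> (Q *v x)))"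
    by (simp only: seminorm_ker_sqrt_psd[OF P] seminorm_ker_sqrt_psd[OF Q])
  then obtain C where C: "C > 0" "\<And>x. sqrt (x \<bullet> (P *v x)) \<le> C * sqrt (x \<bullet> (Q *v x))"
    using seminorms_same_ker_le[OF seminorm_sqrt_psd[OF P] seminorm_sqrt_psd[OF Q]] by blast
  define D where "D = max C 1"
  have D: "D \<ge> 1" "\<And>x. x \<bullet> (P *v x) \<le> D\<^sup>2 * (x \<bullet> (Q *v x))"
  proof -
    show "D \<ge> 1" unfolding D_def by simp
    fix x
    have "C * sqrt (x \<bullet> (Q *v x)) \<le> D * sqrt (x \<bullet> (Q *v x))"
      using psd_kerD(2)[OF Q, of x] by (intro mult_right_mono) (simp_all add: D_def)
    then have "sqrt (x \<bullet> (P *v x)) \<le> D * sqrt (x \<bullet> (Q *v x))" using C(2)[of x] by linarith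
    then have "(sqrt (x \<bullet> (P *v x)))\<^sup>2 \<le> (D * sqrt (x \<bullet> (Q *v x)))\<^sup>2"
      using psd_kerD(2)[OF P, of x] by (intro power_mono) simp_all
    then show "x \<bullet> (P *v x) \<le> D\<^sup>2 * (x \<bullet> (Q *v x))"
      using psd_kerD(2)[OF P, of x] psd_kerD(2)[OF Q, of x] by (simp add: power_mult_distrib)
  qed
  define r where "r = sqrt (1 - 1 / D\<^sup>2)"
  show ?thesis
  proof (rule decays_exponentially_if_contraction)
    show "0 \<le> r" "r < 1" unfolding r_def using D(1) by auto
    fix x
    have "(A *v x) \<bullet> (P *v (A *v x)) = x \<bullet> (P *v x) - x \<bullet> (Q *v x)" by (rule lyapunov_form[OF eq])
    also have "\<dots> \<le> (1 - 1 / D\<^sup>2) * (x \<bullet> (P *v x))"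
      using D(2)[of x] D(1) by (simp add: field_simps)
    finally show "sqrt ((A *v x) \<bullet> (P *v (A *v x))) \<le> r * sqrt (x \<bullet> (P *v x))"
      unfolding r_def by (simp flip: real_sqrt_mult)
  qed (use psd_kerD(2)[OF P] in simp)
qed

lemma orbit_form_bound:
  fixes A P :: "real^'n^'n"
  assumes P: "P \<in> psd_ker E" and decay: "decays_exponentially (\<lambda>x. sqrt (x \<bullet> (P *v x))) A"
  obtains C r where "C > 0" "0 \<le> r" "r < 1" "\<And>k x y. \<bar>orbit A x k \<bullet> (P *v orbit A y k)\<bar>
      \<le> C * r ^ k * (sqrt (x \<bullet> (P *v x)) * sqrt (y \<bullet> (P *v y)))"
proof -
  let ?s = "\<lambda>x. sqrt (x \<bullet> (P *v x))"
  obtain C r where Cr: "C > 0" "0 \<le> r" "r < 1" "\<And>k x. ?s (orbit A x k) \<le> C * ?s x * r ^ k"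
    using decays_exponentiallyE_geometric[OF decay] by blast
  have bound: "\<bar>orbit A x k \<bullet> (P *v orbit A y k)\<bar> \<le> C\<^sup>2 * (r\<^sup>2) ^ k * (?s x * ?s y)" for k x y
  proof -
    have "\<bar>orbit A x k \<bullet> (P *v orbit A y k)\<bar> \<le> ?s (orbit A x k) * ?s (orbit A y k)"
      using psd_Cauchy_Schwarz[OF psd_kerD(1,2)[OF P]] .
    also have "\<dots> \<le> (C * ?s x * r ^ k) * (C * ?s y * r ^ k)"
      by (rule mult_mono[OF Cr(4) Cr(4)]) (use Cr(1,2) in \<open>simp_all add: psd_kerD(2)[OF P]\<close>)
    also have "\<dots> = C\<^sup>2 * (r\<^sup>2) ^ k * (?s x * ?s y)"
      by (simp add: power2_eq_square power_mult_distrib mult_ac)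
    finally show ?thesis .
  qed
  have "r\<^sup>2 < 1" using Cr(2,3) by (simp add: abs_square_less_1)
  then show thesis using that[of "C\<^sup>2" "r\<^sup>2"] Cr(1) bound by simp
qed

lemma orbit_form_tendsto_zero:
  fixes A P :: "real^'n^'n"
  assumes P: "P \<in> psd_ker E" and decay: "decays_exponentially (\<lambda>x. sqrt (x \<bullet> (P *v x))) A"
  shows "(\<lambda>k. orbit A x k \<bullet> (P *v orbit A y k)) \<longlonglongrightarrow> 0"
proof -
  obtain C r where Cr: "C > 0" "0 \<le> r" "r < 1" "\<And>k x y. \<bar>orbit A x k \<bullet> (P *v orbit A y k)\<bar>
      \<le> C * r ^ k * (sqrt (x \<bullet> (P *v x)) * sqrt (y \<bullet> (P *v y)))"
    by (fact orbit_form_bound[OF P decay])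
  define c where "c = sqrt (x \<bullet> (P *v x)) * sqrt (y \<bullet> (P *v y))"
  have "\<forall>k. norm (orbit A x k \<bullet> (P *v orbit A y k)) \<le> C * r ^ k * c"
    using Cr(4) unfolding c_def real_norm_def by blast
  moreover have "(\<lambda>k. C * r ^ k * c) \<longlonglongrightarrow> C * 0 * c"
    using Cr(2,3) by (intro tendsto_mult tendsto_const LIMSEQ_power_zero) simp
  ultimately show ?thesis by (simp add: Lim_null_comparison[OF always_eventually])
qed

lemma summable_matrix_geometric:
  fixes M :: "nat \<Rightarrow> real^'n^'m"
  assumes r: "0 \<le> r" "r < 1" and bound: "\<And>k i j. \<bar>M k $ i $ j\<bar> \<le> B * r ^ k"
  shows "summable M"
proof (rule summable_comparison_test)
  have "norm (M k) \<le> (CARD('m) * CARD('n) * B) * r ^ k" for k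
  proof -
    have "norm (M k) \<le> (\<Sum>i\<in>UNIV. norm (M k $ i))"
      unfolding norm_vec_def by (rule L2_set_le_sum) simp
    also have "\<dots> \<le> (\<Sum>i\<in>(UNIV::'m set). \<Sum>j\<in>(UNIV::'n set). B * r ^ k)"
      using bound by (intro sum_mono order.trans[OF norm_le_l1_cart] sum_mono)
    also have "\<dots> = (CARD('m) * CARD('n) * B) * r ^ k" by simp
    finally show ?thesis .
  qed
  then show "\<exists>N. \<forall>k\<ge>N. norm (M k) \<le> (CARD('m) * CARD('n) * B) * r ^ k" by blast
  show "summable (\<lambda>k. (CARD('m) * CARD('n) * B) * r ^ k)" using r by (simp add: summable_mult)
qed

lemma form_suminf_matrix:
  fixes M :: "nat \<Rightarrow> real^'n^'m"
  assumes "summable M"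
  shows "summable (\<lambda>k. x \<bullet> (M k *v y))" "x \<bullet> (suminf M *v y) = (\<Sum>k. x \<bullet> (M k *v y))"
proof -
  have "linear (\<lambda>N::real^'n^'m. x \<bullet> (N *v y))"
    by (rule linearI) (simp_all add: matrix_vector_mult_add_rdistrib inner_add_right
        scaleR_matrix_vector_assoc[symmetric])
  then have "bounded_linear (\<lambda>N::real^'n^'m. x \<bullet> (N *v y))" by (simp add: linear_conv_bounded_linear)
  from bounded_linear.summable[OF this assms] bounded_linear.suminf[OF this assms]
  show "summable (\<lambda>k. x \<bullet> (M k *v y))" "x \<bullet> (suminf M *v y) = (\<Sum>k. x \<bullet> (M k *v y))" by simp_all
qed

definition matpow :: "real^'n^'n \<Rightarrow> nat \<Rightarrow> real^'n^'n" where
  "matpow A k = matrix (\<lambda>x. orbit A x k)"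

lemma matpow_mult_vec: "matpow A k *v x = orbit A x k"
  unfolding matpow_def by (simp add: matrix_vector_mul(2)[OF linear_orbit])

definition lyapunov_series :: "real^'n^'n \<Rightarrow> real^'n^'n \<Rightarrow> real^'n^'n" where
  "lyapunov_series A Q = (\<Sum>k. transpose (matpow A k) ** Q ** matpow A k)"

lemma lyapunov_series_form:
  fixes A Q :: "real^'n^'n"
  assumes Q: "Q \<in> psd_ker E" and decay: "decays_exponentially (\<lambda>x. sqrt (x \<bullet> (Q *v x))) A"
  shows "summable (\<lambda>k. orbit A x k \<bullet> (Q *v orbit A y k))"
    and "x \<bullet> (lyapunov_series A Q *v y) = (\<Sum>k. orbit A x k \<bullet> (Q *v orbit A y k))"
proof -
  define M where "M k = transpose (matpow A k) ** Q ** matpow A k" for k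
  have M: "x \<bullet> (M k *v y) = orbit A x k \<bullet> (Q *v orbit A y k)" for k x y
  proof -
    have "M k *v y = transpose (matpow A k) *v (Q *v orbit A y k)"
      unfolding M_def by (simp add: matrix_vector_mul_assoc[symmetric] matpow_mult_vec)
    then show ?thesis by (simp only: inner_transpose matpow_mult_vec)
  qed
  obtain C r where Cr: "C > 0" "0 \<le> r" "r < 1" "\<And>k x y. \<bar>orbit A x k \<bullet> (Q *v orbit A y k)\<bar>
      \<le> C * r ^ k * (sqrt (x \<bullet> (Q *v x)) * sqrt (y \<bullet> (Q *v y)))"
    by (fact orbit_form_bound[OF Q decay])
  obtain K where K: "K \<ge> 0" "\<And>x. sqrt (x \<bullet> (Q *v x)) \<le> K * norm x"
    using seminorm_le_norm[OF seminorm_sqrt_psd[OF Q]] by blast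
  have "\<bar>M k $ i $ j\<bar> \<le> (C * K\<^sup>2) * r ^ k" for k i j
  proof -
    have "\<bar>M k $ i $ j\<bar> = \<bar>orbit A (axis i 1) k \<bullet> (Q *v orbit A (axis j 1) k)\<bar>"
      using M[of "axis i 1" k "axis j 1"] by (simp add: inner_axis' matrix_vector_mult_basis column_def)
    also have "\<dots> \<le> C * r ^ k * (K * K)"
      using Cr(1,2) K(1) psd_kerD(2)[OF Q] K(2)[of "axis _ 1"]
      by (intro order.trans[OF Cr(4)] mult_left_mono mult_mono) auto
    finally show ?thesis by (simp add: power2_eq_square mult_ac)
  qed
  then have "summable M" by (rule summable_matrix_geometric[OF Cr(2,3)])
  from form_suminf_matrix[OF this, of x y]
  show "summable (\<lambda>k. orbit A x k \<bullet> (Q *v orbit A y k))"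
    and "x \<bullet> (lyapunov_series A Q *v y) = (\<Sum>k. orbit A x k \<bullet> (Q *v orbit A y k))"
    unfolding lyapunov_series_def M_def[symmetric] M by simp_all
qed

lemma lyapunov_series_solves:
  fixes A Q :: "real^'n^'n"
  assumes Q: "Q \<in> psd_ker E" and decay: "decays_exponentially (\<lambda>x. sqrt (x \<bullet> (Q *v x))) A"
  shows "transpose A ** lyapunov_series A Q ** A - lyapunov_series A Q + Q = 0"
proof (rule matrix_eqI_forms)
  fix x y
  let ?P = "lyapunov_series A Q" and ?b = "\<lambda>k. orbit A x k \<bullet> (Q *v orbit A y k)"
  have "x \<bullet> ((transpose A ** ?P ** A) *v y) = (\<Sum>k. ?b (Suc k))"
    unfolding inner_congruence lyapunov_series_form(2)[OF Q decay] orbit_Suc_right ..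
  also have "\<dots> = x \<bullet> (?P *v y) - x \<bullet> (Q *v y)"
    unfolding lyapunov_series_form(2)[OF Q decay] suminf_split_head[OF lyapunov_series_form(1)[OF Q decay]]
    by simp
  finally show "x \<bullet> ((transpose A ** ?P ** A - ?P + Q) *v y) = x \<bullet> (0 *v y)"
    by (simp add: matrix_vector_mult_add_rdistrib matrix_vector_mult_diff_rdistrib
        inner_add_right inner_diff_right)
qed

lemma lyapunov_series_in_psd_ker:
  fixes A Q :: "real^'n^'n"
  assumes Q: "Q \<in> psd_ker E" and decay: "decays_exponentially (\<lambda>x. sqrt (x \<bullet> (Q *v x))) A"
  shows "lyapunov_series A Q \<in> psd_ker E"
proof -
  note Q' = psd_kerD[OF Q] and form = lyapunov_series_form[OF Q decay]
  let ?P = "lyapunov_series A Q"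
  have "transpose ?P = ?P"
  proof (rule matrix_eqI_forms)
    fix x y
    have "y \<bullet> (?P *v x) = x \<bullet> (?P *v y)" unfolding form(2) by (simp add: inner_symmetric_matrix[OF Q'(1)])
    then show "x \<bullet> (transpose ?P *v y) = x \<bullet> (?P *v y)"
      unfolding inner_transpose by (simp only: inner_commute[of "?P *v x"])
  qed
  moreover have "0 \<le> x \<bullet> (?P *v x)" for x
    unfolding form(2) by (rule suminf_nonneg[OF form(1) Q'(2)])
  moreover have "?P *v x = 0 \<longleftrightarrow> x \<in> E" for x
  proof
    assume "?P *v x = 0"
    have "x \<bullet> (Q *v x) \<le> (\<Sum>k. orbit A x k \<bullet> (Q *v orbit A x k))"
      using sum_le_suminf[OF form(1), of "{0}"] Q'(2) by simp
    then have "x \<bullet> (Q *v x) \<le> 0" using \<open>?P *v x = 0\<close> form(2)[of x x] by simp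
    then have "Q *v x = 0" using psd_eq_0_if_form_eq_0[OF Q'(1,2)] Q'(2)[of x] by simp
    then show "x \<in> E" using Q'(3) by simp
  next
    assume "x \<in> E"
    have "\<forall>x\<in>E. A *v x \<in> E"
      using decays_exponentially_imp_invariant[OF seminorm_sqrt_psd[OF Q] decay] seminorm_ker_sqrt_psd[OF Q]
      by simp
    then have "Q *v orbit A x k = 0" for k using \<open>x \<in> E\<close> Q'(3) orbit_invariant by blast
    then have "(?P *v x) \<bullet> (?P *v x) = 0" using form(2)[of "?P *v x" x] by simp
    then show "?P *v x = 0" by simp
  qed
  ultimately show ?thesis unfolding psd_ker_def by auto
qed

lemma lyapunov_solution_unique:
  fixes A P1 P2 Q :: "real^'n^'n"
  assumes P1: "P1 \<in> psd_ker E" "decays_exponentially (\<lambda>x. sqrt (x \<bullet> (P1 *v x))) A"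
      "transpose A ** P1 ** A - P1 + Q = 0"
    and P2: "P2 \<in> psd_ker E" "decays_exponentially (\<lambda>x. sqrt (x \<bullet> (P2 *v x))) A"
      "transpose A ** P2 ** A - P2 + Q = 0"
  shows "P1 = P2"
proof (rule matrix_eqI_forms)
  fix x y
  define d where "d k = orbit A x k \<bullet> (P1 *v orbit A y k) - orbit A x k \<bullet> (P2 *v orbit A y k)" for k
  have d_Suc: "d (Suc k) = d k" for k
    unfolding d_def orbit_Suc lyapunov_form[OF P1(3)] lyapunov_form[OF P2(3)] by simp
  have "d = (\<lambda>k. d 0)"
  proof
    show "d k = d 0" for k by (induction k) (simp_all add: d_Suc)
  qed
  moreover have "d \<longlonglongrightarrow> 0 - 0"
    unfolding d_def
    by (rule tendsto_diff[OF orbit_form_tendsto_zero[OF P1(1,2)] orbit_form_tendsto_zero[OF P2(1,2)]])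
  ultimately have "(\<lambda>k. d 0) \<longlonglongrightarrow> 0" by simp
  then have "d 0 = 0" by (simp add: LIMSEQ_const_iff)
  then show "x \<bullet> (P1 *v y) = x \<bullet> (P2 *v y)" unfolding d_def by simp
qed

lemma cond4_imp_cond2:
  assumes "cond4 A E"
  shows "cond2 A E"
proof -
  obtain P Q where P: "P \<in> psd_ker E" and Q: "Q \<in> psd_ker E"
    and eq: "transpose A ** P ** A - P + Q = 0"
    using assms unfolding cond4_def by blast
  show ?thesis unfolding cond2_iff_decays
    using seminorm_sqrt_psd[OF P] seminorm_ker_sqrt_psd[OF P] lyapunov_imp_decays[OF P Q eq] by blast
qed

lemma cond2_imp_cond3:
  assumes "cond2 A E"
  shows "cond3 A E"
proof -
  obtain p where p: "seminorm p" "seminorm_ker p = E" "decays_exponentially p A"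
    using assms unfolding cond2_iff_decays by blast
  show ?thesis unfolding cond3_iff_decays
  proof (intro allI impI, elim conjE)
    fix q assume "seminorm q" "seminorm_ker q = E"
    then show "decays_exponentially q A" using decays_exponentially_same_ker[OF p(1)] p(2,3) by simp
  qed
qed

lemma cond2_imp_cond5:
  assumes "cond2 A E"
  shows "cond5 A E"
  unfolding cond5_def
proof (intro ballI ex_ex1I)
  have decays: "decays_exponentially (\<lambda>x. sqrt (x \<bullet> (P *v x))) A" if "P \<in> psd_ker E" for P
    using cond2_imp_cond3[OF assms] seminorm_sqrt_psd[OF that] seminorm_ker_sqrt_psd[OF that]
    unfolding cond3_iff_decays by simp
  fix Q assume Q: "Q \<in> psd_ker E"
  show "\<exists>P. P \<in> psd_ker E \<and> transpose A ** P ** A - P + Q = 0"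
    using lyapunov_series_in_psd_ker[OF Q decays[OF Q]] lyapunov_series_solves[OF Q decays[OF Q]] by blast
  fix P1 P2
  assume "P1 \<in> psd_ker E \<and> transpose A ** P1 ** A - P1 + Q = 0"
    and "P2 \<in> psd_ker E \<and> transpose A ** P2 ** A - P2 + Q = 0"
  then have P1: "P1 \<in> psd_ker E" "transpose A ** P1 ** A - P1 + Q = 0"
    and P2: "P2 \<in> psd_ker E" "transpose A ** P2 ** A - P2 + Q = 0" by simp_all
  show "P1 = P2"
    by (rule lyapunov_solution_unique[OF P1(1) decays[OF P1(1)] P1(2) P2(1) decays[OF P2(1)] P2(2)])
qed

lemma cond5_imp_cond4:
  assumes "subspace E" "cond5 A E"
  shows "cond4 A E"
proof -
  obtain Pr where "perp_projector E Pr" using perp_projector_exists[OF assms(1)] .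
  then have "Pr \<in> psd_ker E" by (rule perp_projector.proj_in_psd_ker)
  then show ?thesis using assms(2) unfolding cond5_def cond4_def by blast
qed

lemma cond3_imp_cond2:
  assumes "subspace E" "cond3 A E"
  shows "cond2 A E"
proof -
  obtain Pr where "perp_projector E Pr" using perp_projector_exists[OF assms(1)] .
  then have "seminorm (\<lambda>x. norm (Pr *v x))" "seminorm_ker (\<lambda>x. norm (Pr *v x)) = E"
    by (simp_all add: seminorm_norm_matrix perp_projector.seminorm_ker_norm_proj)
  then show ?thesis using assms(2) unfolding cond2_iff_decays cond3_iff_decays by blast
qed

section \<open>Complexification and generalized eigenvectors\<close>

definition re_vec :: "complex^'n \<Rightarrow> real^'n" where "re_vec z = (\<chi> i. Re (z $ i))"
definition im_vec :: "complex^'n \<Rightarrow> real^'n" where "im_vec z = (\<chi> i. Im (z $ i))"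
definition cnj_vec :: "complex^'n \<Rightarrow> complex^'n" where "cnj_vec z = (\<chi> i. cnj (z $ i))"

lemma cvec_nth [simp]: "cvec x $ i = complex_of_real (x $ i)" by (simp add: cvec_def)
lemma cmat_nth [simp]: "cmat M $ i $ j = complex_of_real (M $ i $ j)" by (simp add: cmat_def)
lemma re_vec_nth [simp]: "re_vec z $ i = Re (z $ i)" by (simp add: re_vec_def)
lemma im_vec_nth [simp]: "im_vec z $ i = Im (z $ i)" by (simp add: im_vec_def)
lemma cnj_vec_nth [simp]: "cnj_vec z $ i = cnj (z $ i)" by (simp add: cnj_vec_def)

lemma cvec_0 [simp]: "cvec 0 = 0" by (simp add: vec_eq_iff)
lemma cvec_add: "cvec (x + y) = cvec x + cvec y" by (simp add: vec_eq_iff)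
lemma cvec_scaleR: "cvec (c *\<^sub>R x) = complex_of_real c *s cvec x" by (simp add: vec_eq_iff)
lemma re_vec_cvec [simp]: "re_vec (cvec x) = x" by (simp add: vec_eq_iff)
lemma re_vec_add: "re_vec (z + w) = re_vec z + re_vec w" by (simp add: vec_eq_iff)
lemma cnj_vec_0 [simp]: "cnj_vec 0 = 0" by (simp add: vec_eq_iff)
lemma cnj_vec_add: "cnj_vec (z + w) = cnj_vec z + cnj_vec w" by (simp add: vec_eq_iff)
lemma cnj_vec_diff: "cnj_vec (z - w) = cnj_vec z - cnj_vec w" by (simp add: vec_eq_iff)
lemma cnj_vec_scale: "cnj_vec (c *s z) = cnj c *s cnj_vec z" by (simp add: vec_eq_iff)
lemma cnj_vec_eq_0_iff [simp]: "cnj_vec z = 0 \<longleftrightarrow> z = 0" by (simp add: vec_eq_iff)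

lemma re_vec_cmat_mult: "re_vec (cmat M *v z) = M *v re_vec z"
  by (simp add: vec_eq_iff matrix_vector_mult_def Re_sum)

lemma im_vec_cmat_mult: "im_vec (cmat M *v z) = M *v im_vec z"
  by (simp add: vec_eq_iff matrix_vector_mult_def Im_sum)

lemma cnj_vec_cmat_mult: "cnj_vec (cmat M *v z) = cmat M *v cnj_vec z"
  by (simp add: vec_eq_iff matrix_vector_mult_def)

lemma cmat_mult_cvec: "cmat M *v cvec x = cvec (M *v x)"
  by (simp add: vec_eq_iff matrix_vector_mult_def)

lemma vec_eq_0_iff_re_im: "z = 0 \<longleftrightarrow> re_vec z = 0 \<and> im_vec z = 0"
  by (auto simp: vec_eq_iff complex_eq_iff)

lemma cvec_re_vec: "cvec (re_vec z) = (1/2) *s (z + cnj_vec z)"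
  by (simp add: vec_eq_iff complex_eq_iff)

lemma norm_vec_power2: "(norm x)\<^sup>2 = (\<Sum>i\<in>UNIV. (norm (x $ i))\<^sup>2)" for x :: "'a::real_normed_vector^'n"
  unfolding norm_vec_def L2_set_def by (simp add: sum_nonneg)

lemma norm_cvec_squared: "(norm z)\<^sup>2 = (norm (re_vec z))\<^sup>2 + (norm (im_vec z))\<^sup>2"
  unfolding norm_vec_power2 by (simp add: cmod_power2 sum.distrib)

lemma norm_re_vec_le: "norm (re_vec z) \<le> norm z"
  by (rule power2_le_imp_le) (simp_all add: norm_cvec_squared)

lemma norm_le_re_vec_im_vec: "norm z \<le> norm (re_vec z) + norm (im_vec z)"
  by (rule power2_le_imp_le) (simp_all add: norm_cvec_squared power2_sum)

lemma norm_scalar_mult_cvec: "norm (c *s z) = cmod c * norm z" for z :: "complex^'n"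
  unfolding norm_vec_def by (simp add: norm_mult L2_set_right_distrib)

definition corbit :: "real^'n^'n \<Rightarrow> complex^'n \<Rightarrow> nat \<Rightarrow> complex^'n" where
  "corbit A z k = (((*v) (cmat A)) ^^ k) z"

lemma corbit_0 [simp]: "corbit A z 0 = z"
  by (simp add: corbit_def)

lemma corbit_Suc: "corbit A z (Suc k) = cmat A *v corbit A z k"
  by (simp add: corbit_def)

lemma corbit_Suc_right: "corbit A z (Suc k) = corbit A (cmat A *v z) k"
  by (simp add: corbit_def funpow_Suc_right del: funpow.simps)

lemma corbit_add: "corbit A (z + w) k = corbit A z k + corbit A w k"
  by (induction k) (simp_all add: corbit_Suc matrix_vector_right_distrib)

lemma corbit_scale: "corbit A (c *s z) k = c *s corbit A z k"
  by (induction k) (simp_all add: corbit_Suc vector_scalar_commute)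

lemma corbit_zero [simp]: "corbit A 0 = (\<lambda>k. 0)"
proof
  show "corbit A 0 k = 0" for k by (induction k) (simp_all add: corbit_Suc)
qed

lemma re_vec_corbit: "re_vec (corbit A z k) = orbit A (re_vec z) k"
  by (induction k) (simp_all add: corbit_Suc orbit_Suc re_vec_cmat_mult)

lemma im_vec_corbit: "im_vec (corbit A z k) = orbit A (im_vec z) k"
  by (induction k) (simp_all add: corbit_Suc orbit_Suc im_vec_cmat_mult)

abbreviation shift :: "real^'n^'n \<Rightarrow> complex \<Rightarrow> complex^'n^'n" where
  "shift A l \<equiv> cmat A - (\<chi> i j. if i = j then l else 0)"

lemma shift_mult: "shift A l *v w = cmat A *v w - l *s w"
proof -
  have "(\<chi> i j. if i = j then l else 0) *v w = l *s w"
    by (simp add: vec_eq_iff matrix_vector_mult_def if_distrib[of "\<lambda>a. a * _"] cong: if_cong)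
  then show ?thesis by (simp add: matrix_vector_mult_diff_rdistrib)
qed

lemma cnj_vec_shift_power:
  "cnj_vec ((((*v) (shift A l)) ^^ k) w) = (((*v) (shift A (cnj l))) ^^ k) (cnj_vec w)"
  by (induction k) (simp_all add: shift_mult cnj_vec_diff cnj_vec_cmat_mult cnj_vec_scale)

abbreviation unstable_gen_eigenvectors :: "real^'n^'n \<Rightarrow> (complex^'n) set" where
  "unstable_gen_eigenvectors A \<equiv> {v. \<exists>l. cmod l \<ge> 1 \<and> gen_eigenvector A l v}"

lemma E_ge1_subspace: "subspace (E_ge1 A)"
  unfolding subspace_def E_ge1_def
  by (auto simp: cvec_add cvec_scaleR vec.span_zero vec.span_add vec.span_scale)

lemma span_unstable_gen_eigenvectors_invariant:
  assumes "z \<in> vec.span (unstable_gen_eigenvectors A)"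
  shows "cmat A *v z \<in> vec.span (unstable_gen_eigenvectors A)"
proof -
  let ?S = "vec.span (unstable_gen_eigenvectors A)"
  have "z \<in> {z. cmat A *v z \<in> ?S}"
    using assms
  proof (rule vec.span_subspace_induct)
    show "vec.subspace {z. cmat A *v z \<in> ?S}"
      unfolding vec.subspace_def
      by (auto simp: matrix_vector_right_distrib vector_scalar_commute vec.span_zero vec.span_add
          vec.span_scale)
    fix v assume "v \<in> unstable_gen_eigenvectors A"
    then obtain l k where l: "cmod l \<ge> 1" "v \<noteq> 0" "(((*v) (shift A l)) ^^ k) v = 0"
      unfolding gen_eigenvector_def by blast
    have "shift A l *v v \<in> ?S"
    proof (cases "shift A l *v v = 0")
      case False
      have "(((*v) (shift A l)) ^^ k) (shift A l *v v) = shift A l *v ((((*v) (shift A l)) ^^ k) v)"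
        by (simp add: funpow_swap1)
      then have "gen_eigenvector A l (shift A l *v v)"
        using False l(3) unfolding gen_eigenvector_def by auto
      then show ?thesis using l(1) by (intro vec.span_base) blast
    qed (simp add: vec.span_zero)
    moreover have "v \<in> ?S" using l unfolding gen_eigenvector_def by (intro vec.span_base) blast
    moreover have "cmat A *v v = l *s v + shift A l *v v" by (simp add: shift_mult)
    ultimately show "v \<in> {z. cmat A *v z \<in> ?S}" by (simp add: vec.span_add vec.span_scale)
  qed
  then show ?thesis by simp
qed

lemma E_ge1_invariant: "x \<in> E_ge1 A \<Longrightarrow> A *v x \<in> E_ge1 A"
  unfolding E_ge1_def using span_unstable_gen_eigenvectors_invariant by (simp flip: cmat_mult_cvec)

lemma span_unstable_gen_eigenvectors_cnj:
  assumes "z \<in> vec.span (unstable_gen_eigenvectors A)"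
  shows "cnj_vec z \<in> vec.span (unstable_gen_eigenvectors A)"
proof -
  let ?S = "vec.span (unstable_gen_eigenvectors A)"
  have "z \<in> {z. cnj_vec z \<in> ?S}"
    using assms
  proof (rule vec.span_subspace_induct)
    show "vec.subspace {z. cnj_vec z \<in> ?S}"
      unfolding vec.subspace_def
      by (auto simp: cnj_vec_add cnj_vec_scale vec.span_zero vec.span_add vec.span_scale)
    fix v assume "v \<in> unstable_gen_eigenvectors A"
    then obtain l k where l: "cmod l \<ge> 1" "v \<noteq> 0" "(((*v) (shift A l)) ^^ k) v = 0"
      unfolding gen_eigenvector_def by blast
    then have "gen_eigenvector A (cnj l) (cnj_vec v)"
      unfolding gen_eigenvector_def using cnj_vec_shift_power[where A=A and l=l and k=k and w=v] by auto
    then have "cnj_vec v \<in> unstable_gen_eigenvectors A" using l(1) by (auto intro!: exI[of _ "cnj l"])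
    then show "v \<in> {z. cnj_vec z \<in> ?S}" by (simp add: vec.span_base)
  qed
  then show ?thesis by simp
qed

lemma le_0_if_le_geometric:
  fixes a C r :: real
  assumes "0 \<le> r" "r < 1" "\<And>k. a \<le> C * r ^ k"
  shows "a \<le> 0"
proof -
  have "(\<lambda>k. C * r ^ k) \<longlonglongrightarrow> C * 0"
    using assms(1,2) by (intro tendsto_mult tendsto_const LIMSEQ_power_zero) simp
  then show ?thesis using LIMSEQ_le_const[of "\<lambda>k. C * r ^ k" 0 a] assms(3) by auto
qed

lemma cmat_mult_eq_0_iff: "cmat M *v z = 0 \<longleftrightarrow> M *v re_vec z = 0 \<and> M *v im_vec z = 0"
  by (simp add: vec_eq_0_iff_re_im[of "cmat M *v z"] re_vec_cmat_mult im_vec_cmat_mult)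

context
  fixes A M :: "real^'n^'n"
  assumes decay: "decays_exponentially (\<lambda>x. norm (M *v x)) A"
begin

lemma cmat_kernel_corbit:
  assumes "cmat M *v z = 0"
  shows "cmat M *v corbit A z k = 0"
proof -
  have "\<forall>x\<in>{x. M *v x = 0}. A *v x \<in> {x. M *v x = 0}"
    using decays_exponentially_imp_invariant[OF seminorm_norm_matrix decay]
    unfolding seminorm_ker_norm_matrix by blast
  then show ?thesis
    using assms unfolding cmat_mult_eq_0_iff re_vec_corbit im_vec_corbit using orbit_invariant by blast
qed

text \<open>Modulo \<open>ker M\<close>, such a \<open>w\<close> evolves like an eigenvector for \<open>l\<close>, so \<open>M w\<close> cannot decay.\<close>

lemma cmat_kernel_if_shift_in_kernel:
  assumes l: "1 \<le> cmod l" and e: "cmat M *v (shift A l *v w) = 0"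
  shows "cmat M *v w = 0"
proof -
  obtain C r where Cr: "C > 0" "0 \<le> r" "r < 1" "\<And>k x. norm (M *v orbit A x k) \<le> C * norm (M *v x) * r ^ k"
    by (fact decays_exponentiallyE_geometric[OF decay])
  have Aw: "cmat A *v w = l *s w + shift A l *v w" by (simp add: shift_mult)
  have power: "cmat M *v corbit A w k = l ^ k *s (cmat M *v w)" for k
  proof (induction k)
    case (Suc k)
    have "cmat M *v corbit A w (Suc k) = l *s (cmat M *v corbit A w k)"
      using cmat_kernel_corbit[OF e, of k] unfolding corbit_Suc_right Aw corbit_add corbit_scale
      by (simp add: matrix_vector_right_distrib vector_scalar_commute)
    then show ?case using Suc by (simp add: vector_smult_assoc)
  qed simp
  have "norm (cmat M *v w) \<le> (C * (norm (M *v re_vec w) + norm (M *v im_vec w))) * r ^ k" for k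
  proof -
    have "norm (cmat M *v w) \<le> cmod l ^ k * norm (cmat M *v w)"
      using l by (simp add: mult_le_cancel_right1 one_le_power)
    also have "\<dots> = norm (cmat M *v corbit A w k)" by (simp add: power norm_scalar_mult_cvec norm_power)
    also have "\<dots> \<le> norm (M *v orbit A (re_vec w) k) + norm (M *v orbit A (im_vec w) k)"
      using norm_le_re_vec_im_vec[of "cmat M *v corbit A w k"]
      by (simp add: re_vec_cmat_mult im_vec_cmat_mult re_vec_corbit im_vec_corbit)
    also have "\<dots> \<le> C * norm (M *v re_vec w) * r ^ k + C * norm (M *v im_vec w) * r ^ k"
      by (intro add_mono Cr(4))
    finally show ?thesis by (simp add: algebra_simps)
  qed
  then have "norm (cmat M *v w) \<le> 0" by (rule le_0_if_le_geometric[OF Cr(2,3)])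
  then show ?thesis by simp
qed

lemma decays_imp_E_ge1_subset: "E_ge1 A \<subseteq> {x. M *v x = 0}"
proof
  let ?K = "{z. cmat M *v z = 0}"
  have nilpotent: "w \<in> ?K" if "1 \<le> cmod l" "(((*v) (shift A l)) ^^ m) w \<in> ?K" for l m w
    using that(2)
  proof (induction m arbitrary: w)
    case (Suc m)
    have "(((*v) (shift A l)) ^^ m) (shift A l *v w) \<in> ?K"
      using Suc.prems by (simp add: funpow_Suc_right del: funpow.simps)
    then show ?case using cmat_kernel_if_shift_in_kernel[OF that(1)] Suc.IH by blast
  qed simp
  fix x assume "x \<in> E_ge1 A"
  then have "cvec x \<in> vec.span (unstable_gen_eigenvectors A)" unfolding E_ge1_def by simp
  then have "cvec x \<in> ?K"
  proof (rule vec.span_subspace_induct)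
    show "vec.subspace ?K"
      unfolding vec.subspace_def by (auto simp: matrix_vector_right_distrib vector_scalar_commute)
    fix v assume "v \<in> unstable_gen_eigenvectors A"
    then obtain l k where "1 \<le> cmod l" "(((*v) (shift A l)) ^^ k) v = 0"
      unfolding gen_eigenvector_def by blast
    then show "v \<in> ?K" using nilpotent[of l k v] by simp
  qed
  then show "x \<in> {x. M *v x = 0}" by (simp add: cmat_mult_cvec vec_eq_iff)
qed

end

section \<open>Primary decomposition along the orbit\<close>

definition poly_act :: "real^'n^'n \<Rightarrow> complex poly \<Rightarrow> complex^'n \<Rightarrow> complex^'n" where
  "poly_act A p v = (\<Sum>i\<le>degree p. coeff p i *s corbit A v i)"

lemma poly_act_upto:
  assumes "degree p \<le> n"
  shows "poly_act A p v = (\<Sum>i\<le>n. coeff p i *s corbit A v i)"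
  unfolding poly_act_def
  by (rule sum.mono_neutral_left) (use assms in \<open>auto simp: coeff_eq_0\<close>)

lemma poly_act_add: "poly_act A (p + q) v = poly_act A p v + poly_act A q v"
proof -
  define n where "n = max (degree p) (degree q)"
  have "poly_act A (p + q) v = (\<Sum>i\<le>n. coeff (p + q) i *s corbit A v i)"
    by (rule poly_act_upto) (simp add: n_def degree_add_le)
  also have "\<dots> = (\<Sum>i\<le>n. coeff p i *s corbit A v i) + (\<Sum>i\<le>n. coeff q i *s corbit A v i)"
    by (simp add: vector_sadd_rdistrib sum.distrib)
  also have "\<dots> = poly_act A p v + poly_act A q v"
    using poly_act_upto[where p=p and n=n and A=A and v=v] poly_act_upto[where p=q and n=n and A=A and v=v]
    by (simp add: n_def)
  finally show ?thesis .
qed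

lemma poly_act_smult: "poly_act A (smult c p) v = c *s poly_act A p v"
  using poly_act_upto[OF degree_smult_le, of A c p v]
  by (simp add: poly_act_def vec.scale_sum_right vector_smult_assoc)

lemma poly_act_0 [simp]: "poly_act A 0 v = 0"
  by (simp add: poly_act_def)

lemma poly_act_0_right [simp]: "poly_act A p 0 = 0"
  by (simp add: poly_act_def)

lemma poly_act_pCons: "poly_act A (pCons a p) v = a *s v + cmat A *v poly_act A p v"
proof -
  have "poly_act A (pCons a p) v = (\<Sum>i\<le>Suc (degree p). coeff (pCons a p) i *s corbit A v i)"
    by (rule poly_act_upto) (rule degree_pCons_le)
  also have "\<dots> = (\<Sum>i\<le>degree p. coeff p i *s corbit A v (Suc i)) + a *s v"
    by (subst sum.atMost_Suc_shift) simp
  also have "(\<Sum>i\<le>degree p. coeff p i *s corbit A v (Suc i)) = cmat A *v poly_act A p v"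
    by (simp add: poly_act_def corbit_Suc vec.sum vector_scalar_commute)
  finally show ?thesis by simp
qed

lemma poly_act_const: "poly_act A [:c:] v = c *s v"
  by (simp add: poly_act_def)

lemma poly_act_1: "poly_act A 1 v = v"
  using poly_act_const[of A 1 v] by (simp add: one_pCons)

lemma poly_act_mult: "poly_act A (p * q) v = poly_act A p (poly_act A q v)"
proof (induction p rule: pCons_induct)
  case (pCons a p)
  have "poly_act A (pCons a p * q) v = poly_act A (smult a q + pCons 0 (p * q)) v" by simp
  also have "\<dots> = a *s poly_act A q v + cmat A *v poly_act A p (poly_act A q v)"
    by (simp add: poly_act_add poly_act_smult poly_act_pCons pCons.IH)
  also have "\<dots> = poly_act A (pCons a p) (poly_act A q v)" by (simp add: poly_act_pCons)
  finally show ?case .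
qed simp

lemma poly_act_linear_power: "poly_act A ([:-l, 1:] ^ m) v = (((*v) (shift A l)) ^^ m) v"
proof (induction m)
  case (Suc m)
  have "poly_act A [:-l, 1:] w = shift A l *v w" for w
    by (simp add: poly_act_pCons poly_act_const shift_mult)
  then show ?case by (simp only: power_Suc poly_act_mult Suc.IH funpow.simps comp_def)
qed (simp add: poly_act_1)

lemma poly_act_monom: "poly_act A (monom c i) v = c *s corbit A v i"
proof -
  have "poly_act A (monom c i) v = (\<Sum>k\<le>i. coeff (monom c i) k *s corbit A v k)"
    by (rule poly_act_upto) (rule degree_monom_le)
  also have "\<dots> = c *s corbit A v i"
    by (simp add: coeff_monom if_distrib[of "\<lambda>a. a *s _"] cong: if_cong)
  finally show ?thesis .
qed

lemma poly_act_sum: "poly_act A (sum f S) v = (\<Sum>i\<in>S. poly_act A (f i) v)"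
  by (induction S rule: infinite_finite_induct) (simp_all add: poly_act_add)

lemma annihilating_poly_if_dependent:
  assumes I: "finite I" and inj: "inj_on (corbit A v) I" and dep: "vec.dependent (corbit A v ` I)"
  obtains p where "p \<noteq> 0" "poly_act A p v = 0"
proof -
  obtain T U where TU: "T \<subseteq> corbit A v ` I" "(\<Sum>w\<in>T. U w *s w) = 0" "\<exists>w\<in>T. U w \<noteq> 0"
    using dep unfolding vec.dependent_explicit by blast
  define c where "c i = (if corbit A v i \<in> T then U (corbit A v i) else 0)" for i
  define p :: "complex poly" where "p = (\<Sum>i\<in>I. monom (c i) i)"
  have "poly_act A p v = (\<Sum>i\<in>{i\<in>I. corbit A v i \<in> T}. U (corbit A v i) *s corbit A v i)"
    unfolding p_def poly_act_sum poly_act_monom c_def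
    by (subst sum.inter_filter[OF I]) (simp add: if_distrib[of "\<lambda>a. a *s _"] cong: if_cong)
  also have "\<dots> = (\<Sum>w\<in>corbit A v ` {i\<in>I. corbit A v i \<in> T}. U w *s w)"
    by (rule sum.reindex[symmetric, unfolded comp_def]) (rule inj_on_subset[OF inj], auto)
  also have "corbit A v ` {i\<in>I. corbit A v i \<in> T} = T" using TU(1) by auto
  finally have "poly_act A p v = 0" using TU(2) by simp
  moreover have "p \<noteq> 0"
  proof -
    obtain i where i: "i \<in> I" "corbit A v i \<in> T" "U (corbit A v i) \<noteq> 0" using TU(1,3) by blast
    have "coeff p i = c i" unfolding p_def using I i(1) by (simp add: coeff_sum coeff_monom)
    then show ?thesis using i unfolding c_def by auto
  qed
  ultimately show thesis using that by blast
qed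

lemma annihilating_poly_exists:
  fixes A :: "real^'n^'n"
  obtains p where "p \<noteq> 0" "poly_act A p v = 0"
proof (cases "inj_on (corbit A v) {..CARD('n)}")
  case False
  then obtain i j where ij: "i \<noteq> j" "corbit A v i = corbit A v j" unfolding inj_on_def by blast
  define p :: "complex poly" where "p = monom 1 i + smult (-1) (monom 1 j)"
  have "coeff p i = 1" unfolding p_def using ij(1) by simp
  then have "p \<noteq> 0" by auto
  moreover have "poly_act A p v = 0"
    unfolding p_def poly_act_add poly_act_smult poly_act_monom using ij(2)
    by (simp add: vector_sneg_minus1[symmetric])
  ultimately show thesis by (rule that)
next
  case True
  have "vec.dim (corbit A v ` {..CARD('n)}) \<le> CARD('n)" by (rule dim_subset_UNIV_cart_gen)
  then have "vec.dependent (corbit A v ` {..CARD('n)})"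
    using True by (intro vec.dependent_biggerset_general) (simp add: card_image)
  then show thesis using annihilating_poly_if_dependent[OF finite_atMost True] that by blast
qed

lemma LIMSEQ_zero_if_perturbed_contraction:
  fixes s t :: "nat \<Rightarrow> real"
  assumes r: "0 \<le> r" "r < 1" and s_nonneg: "\<And>k. 0 \<le> s k"
    and rec: "\<And>k. s (Suc k) \<le> r * s k + t k" and t: "t \<longlonglongrightarrow> 0"
  shows "s \<longlonglongrightarrow> 0"
proof (rule LIMSEQ_I)
  fix \<epsilon> :: real assume "0 < \<epsilon>"
  define \<delta> where "\<delta> = \<epsilon> * (1 - r) / 2"
  have "\<delta> > 0" using \<open>0 < \<epsilon>\<close> r by (simp add: \<delta>_def)
  obtain N where N: "\<And>k. k \<ge> N \<Longrightarrow> norm (t k - 0) < \<delta>" using LIMSEQ_D[OF t \<open>\<delta> > 0\<close>] by blast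
  have tail: "s (N + j) \<le> \<epsilon> / 2 + r ^ j * s N" for j
  proof (induction j)
    case (Suc j)
    have "s (N + Suc j) \<le> r * s (N + j) + t (N + j)" using rec[of "N + j"] by simp
    also have "\<dots> \<le> r * (\<epsilon> / 2 + r ^ j * s N) + \<delta>"
      using Suc r N[of "N + j"] by (intro add_mono mult_left_mono) auto
    also have "\<dots> = \<epsilon> / 2 + r ^ Suc j * s N" by (simp add: \<delta>_def field_simps)
    finally show ?case .
  qed (use \<open>0 < \<epsilon>\<close> in simp)
  have "(\<lambda>j. r ^ j * s N) \<longlonglongrightarrow> 0 * s N"
    using r by (intro tendsto_mult LIMSEQ_power_zero tendsto_const) simp
  then obtain J where J: "\<And>j. j \<ge> J \<Longrightarrow> norm (r ^ j * s N - 0) < \<epsilon> / 2"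
    using LIMSEQ_D[of "\<lambda>j. r ^ j * s N" 0 "\<epsilon> / 2"] \<open>0 < \<epsilon>\<close> by auto
  have "norm (s n - 0) < \<epsilon>" if "n \<ge> N + J" for n
  proof -
    have "0 \<le> r ^ (n - N) * s N" using r s_nonneg[of N] by simp
    moreover have "J \<le> n - N" using that by simp
    ultimately show ?thesis using tail[of "n - N"] J[of "n - N"] s_nonneg[of n] that by simp
  qed
  then show "\<exists>n0. \<forall>n\<ge>n0. norm (s n - 0) < \<epsilon>" by blast
qed

lemma corbit_tendsto_zero_if_stable:
  assumes l: "cmod l < 1" and nil: "(((*v) (shift A l)) ^^ m) w = 0"
  shows "corbit A w \<longlonglongrightarrow> 0"
  using nil
proof (induction m arbitrary: w)
  case (Suc m)
  define u where "u = shift A l *v w"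
  have "(((*v) (shift A l)) ^^ m) u = 0"
    using Suc.prems unfolding u_def by (simp add: funpow_Suc_right del: funpow.simps)
  then have u: "corbit A u \<longlonglongrightarrow> 0" by (rule Suc.IH)
  have "cmat A *v w = l *s w + u" unfolding u_def shift_mult by simp
  then have "corbit A w (Suc k) = l *s corbit A w k + corbit A u k" for k
    by (simp only: corbit_Suc_right corbit_add corbit_scale)
  then have rec: "norm (corbit A w (Suc k)) \<le> cmod l * norm (corbit A w k) + norm (corbit A u k)" for k
    using norm_triangle_ineq[of "l *s corbit A w k" "corbit A u k"] by (simp add: norm_scalar_mult_cvec)
  have "(\<lambda>k. norm (corbit A w k)) \<longlonglongrightarrow> 0"
    by (rule LIMSEQ_zero_if_perturbed_contraction[where r = "cmod l" and t = "\<lambda>k. norm (corbit A u k)"])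
      (use l u rec in \<open>auto simp: tendsto_norm_zero_iff\<close>)
  then show ?case by (simp add: tendsto_norm_zero_iff)
qed simp

lemma poly_act_coprime_split:
  assumes "coprime g h" "poly_act A (g * h) v = 0"
  obtains u1 u2 where "v = u1 + u2" "poly_act A g u1 = 0" "poly_act A h u2 = 0"
proof -
  obtain a b where ab: "a * g + b * h = 1"
    using assms(1) by (metis bezout_coefficients_fst_snd coprime_imp_gcd_eq_1)
  define u1 u2 where "u1 = poly_act A (b * h) v" and "u2 = poly_act A (a * g) v"
  have "v = u1 + u2" using ab unfolding u1_def u2_def by (metis add.commute poly_act_1 poly_act_add)
  moreover have "poly_act A g u1 = poly_act A b (poly_act A (g * h) v)"
    unfolding u1_def poly_act_mult[symmetric] by (simp add: mult_ac)
  moreover have "poly_act A h u2 = poly_act A a (poly_act A (g * h) v)"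
    unfolding u2_def poly_act_mult[symmetric] by (simp add: mult_ac)
  ultimately show thesis using assms(2) that by simp
qed

lemma root_power_factor:
  fixes p :: "complex poly"
  assumes "p \<noteq> 0" "poly p l = 0"
  obtains m h where "m > 0" "p = [:-l, 1:] ^ m * h" "coprime ([:-l, 1:] ^ m) h"
proof -
  obtain h where h: "p = [:-l, 1:] ^ order l p * h" "\<not> [:-l, 1:] dvd h"
    using order_decomp[OF assms(1)] by blast
  moreover have "order l p > 0" using order_root[of p l] assms by simp
  moreover have "coprime h ([:-l, 1:] ^ order l p)"
    by (rule prime_elem_imp_power_coprime[OF prime_elem_linear_field_poly h(2)]) simp
  ultimately show thesis using that by (simp add: coprime_commute)
qed

lemma primary_decomposition:
  fixes A :: "real^'n^'n"
  assumes "p \<noteq> 0" "poly_act A p v = 0"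
  shows "\<exists>v1 v2. v = v1 + v2 \<and> v1 \<in> vec.span (unstable_gen_eigenvectors A) \<and> corbit A v2 \<longlonglongrightarrow> 0"
  using assms
proof (induction "degree p" arbitrary: p v rule: less_induct)
  case less
  show ?case
  proof (cases "degree p = 0")
    case True
    then obtain c where "p = [:c:]" "c \<noteq> 0" using less.prems(1) by (metis degree_eq_zeroE pCons_eq_0_iff)
    then have "v = 0" using less.prems(2) by (simp add: poly_act_const vec.scale_eq_0_iff)
    then show ?thesis by (intro exI[of _ 0]) (simp add: vec.span_zero)
  next
    case False
    then obtain l where "poly p l = 0" using fundamental_theorem_of_algebra constant_degree by metis
    then obtain m h where mh: "m > 0" "p = [:-l, 1:] ^ m * h" "coprime ([:-l, 1:] ^ m) h"
      using root_power_factor less.prems(1) by blast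
    obtain u1 u2 where u: "v = u1 + u2" "poly_act A ([:-l, 1:] ^ m) u1 = 0" "poly_act A h u2 = 0"
      using poly_act_coprime_split[OF mh(3)] less.prems(2) mh(2) by metis
    have "h \<noteq> 0" "degree h < degree p"
      using less.prems(1) mh(1,2) by (auto simp: degree_mult_eq degree_linear_power)
    then obtain a1 a2 where a: "u2 = a1 + a2" "a1 \<in> vec.span (unstable_gen_eigenvectors A)"
      "corbit A a2 \<longlonglongrightarrow> 0"
      using less.hyps u(3) by blast
    have u1: "(((*v) (shift A l)) ^^ m) u1 = 0" using u(2) by (simp add: poly_act_linear_power)
    show ?thesis
    proof (cases "1 \<le> cmod l")
      case True
      then have "u1 \<in> vec.span (unstable_gen_eigenvectors A)"
        using u1 unfolding gen_eigenvector_def by (cases "u1 = 0") (auto intro: vec.span_base simp: vec.span_zero)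
      then show ?thesis using a u(1)
        by (intro exI[of _ "u1 + a1"] exI[of _ a2]) (simp add: vec.span_add add.assoc)
    next
      case False
      then have "corbit A u1 \<longlonglongrightarrow> 0" using corbit_tendsto_zero_if_stable[OF _ u1] by simp
      then have "corbit A (u1 + a2) \<longlonglongrightarrow> 0 + 0"
        unfolding corbit_add[abs_def] using a(3) by (rule tendsto_add)
      then show ?thesis using a u(1)
        by (intro exI[of _ a1] exI[of _ "u1 + a2"]) (simp add: algebra_simps)
    qed
  qed
qed

section \<open>Exponential decay and the spectral condition\<close>

lemma orbit_tendsto_zero_mod_invariant:
  fixes A M :: "real^'n^'n"
  assumes inv: "\<forall>x\<in>E. A *v x \<in> E" and sub: "E_ge1 A \<subseteq> E" and M: "\<And>x. x \<in> E \<Longrightarrow> M *v x = 0"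
  shows "(\<lambda>k. M *v orbit A x k) \<longlonglongrightarrow> 0"
proof -
  obtain p where "p \<noteq> 0" "poly_act A p (cvec x) = 0" by (rule annihilating_poly_exists)
  then obtain v1 v2 where v: "cvec x = v1 + v2" "v1 \<in> vec.span (unstable_gen_eigenvectors A)"
    "corbit A v2 \<longlonglongrightarrow> 0"
    using primary_decomposition by blast
  \<comment> \<open>The span is closed under conjugation, so it contains the real part of \<open>v1\<close>.\<close>
  have "cvec (re_vec v1) \<in> vec.span (unstable_gen_eigenvectors A)"
    unfolding cvec_re_vec using v(2) span_unstable_gen_eigenvectors_cnj[OF v(2)]
    by (simp add: vec.span_add vec.span_scale)
  then have "re_vec v1 \<in> E" using sub unfolding E_ge1_def by auto
  then have "M *v orbit A (re_vec v1) k = 0" for k by (simp add: M orbit_invariant[OF inv])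
  moreover have "x = re_vec v1 + re_vec v2" using arg_cong[OF v(1), of re_vec] by (simp add: re_vec_add)
  ultimately have eq: "M *v orbit A x k = re_vec (cmat M *v corbit A v2 k)" for k
    by (simp add: orbit_add matrix_vector_right_distrib re_vec_cmat_mult re_vec_corbit)
  have "(\<lambda>k. cmat M *v corbit A v2 k) \<longlonglongrightarrow> cmat M *v 0"
    by (rule bounded_linear.tendsto[OF matrix_vector_mul_bounded_linear v(3)])
  then have "(\<lambda>k. norm (cmat M *v corbit A v2 k)) \<longlonglongrightarrow> 0" by (simp add: tendsto_norm_zero_iff)
  moreover have "\<forall>k. norm (M *v orbit A x k) \<le> norm (cmat M *v corbit A v2 k)"
    by (simp add: eq norm_re_vec_le)
  ultimately show ?thesis by (simp add: Lim_null_comparison[OF always_eventually])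
qed

lemma norm_linear_le_sum_basis:
  fixes f :: "real^'n \<Rightarrow> real^'m"
  assumes "linear f"
  shows "norm (f y) \<le> norm y * (\<Sum>i\<in>UNIV. norm (f (axis i 1)))"
proof -
  have "f y = (\<Sum>i\<in>UNIV. y $ i *\<^sub>R f (axis i 1))"
    using basis_expansion[of y] linear_sum[OF assms] linear_scale[OF assms]
    by (metis (no_types, lifting) scalar_mult_eq_scaleR sum.cong)
  then have "norm (f y) \<le> (\<Sum>i\<in>UNIV. \<bar>y $ i\<bar> * norm (f (axis i 1)))"
    using norm_sum[of "\<lambda>i. y $ i *\<^sub>R f (axis i 1)" UNIV] by simp
  also have "\<dots> \<le> (\<Sum>i\<in>UNIV. norm y * norm (f (axis i 1)))"
    by (intro sum_mono mult_right_mono) (auto simp: component_le_norm_cart)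
  finally show ?thesis by (simp add: sum_distrib_left)
qed

lemma decays_exponentially_if_halving:
  assumes nonneg: "\<And>x. 0 \<le> p x" and "K > 0"
    and half: "\<And>x. p (orbit A x K) \<le> p x / 2" and bounded: "\<And>x j. p (orbit A x j) \<le> L * p x"
  shows "decays_exponentially p A"
proof -
  have periodic: "p (orbit A x (m * K + j)) \<le> (1/2) ^ m * (L * p x)" for m j x
  proof (induction m)
    case (Suc m)
    have "p (orbit A x (Suc m * K + j)) = p (orbit A (orbit A x (m * K + j)) K)"
      by (simp add: orbit_add_steps[symmetric] add.assoc)
    also have "\<dots> \<le> p (orbit A x (m * K + j)) / 2" by (rule half)
    also have "\<dots> \<le> (1/2) ^ Suc m * (L * p x)" using Suc by simp
    finally show ?case .
  qed (simp add: bounded)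
  define \<rho> where "\<rho> = root K (1/2)"
  have \<rho>: "0 < \<rho>" "\<rho> < 1" "\<rho> ^ K = 1/2"
    using \<open>K > 0\<close> by (auto simp: \<rho>_def real_root_lt_1_iff real_root_pow_pos)
  show ?thesis
  proof (rule decays_exponentiallyI_geometric[OF nonneg less_imp_le[OF \<rho>(1)] \<rho>(2)])
    fix k x
    define m j where "m = k div K" and "j = k mod K"
    have k: "k = m * K + j" "j \<le> K" using \<open>K > 0\<close> by (simp_all add: m_def j_def less_imp_le)
    have "(1/2) ^ m = \<rho> ^ (K * m)" by (simp add: power_mult \<rho>(3))
    also have "\<dots> = 2 * (\<rho> ^ (K * m) * \<rho> ^ K)" by (simp add: \<rho>(3))
    also have "\<dots> \<le> 2 * (\<rho> ^ (K * m) * \<rho> ^ j)"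
      using \<rho> k(2) by (intro mult_left_mono power_decreasing) auto
    also have "\<dots> = 2 * \<rho> ^ k" by (simp add: k(1) power_add mult.commute)
    finally have "(1/2) ^ m \<le> 2 * \<rho> ^ k" .
    moreover have "0 \<le> L * p x" using bounded[of x 0] nonneg[of x] by simp
    ultimately have "(1/2) ^ m * (L * p x) \<le> 2 * \<rho> ^ k * (L * p x)" by (rule mult_right_mono)
    then show "p (orbit A x k) \<le> (2 * L) * p x * \<rho> ^ k"
      using periodic[of x m j] k(1) by (simp add: mult_ac)
  qed
qed

context perp_projector
begin

lemma decays_if_orbit_tendsto_zero:
  assumes inv: "\<forall>x\<in>E. A *v x \<in> E" and conv: "\<And>x. (\<lambda>k. Pr *v orbit A x k) \<longlonglongrightarrow> 0"
  shows "decays_exponentially (\<lambda>x. norm (Pr *v x)) A"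
proof -
  define s where "s k = (\<Sum>i\<in>UNIV. norm (Pr *v orbit A (axis i 1) k))" for k
  have bound: "norm (Pr *v orbit A x k) \<le> s k * norm (Pr *v x)" for x k
  proof -
    have "orbit A (x - Pr *v x) k \<in> E" by (rule orbit_invariant[OF inv diff_proj_in_E])
    then have "Pr *v (orbit A x k - orbit A (Pr *v x) k) = 0" by (simp add: orbit_diff proj_eq_0_iff)
    then have "Pr *v orbit A x k = Pr *v orbit A (Pr *v x) k" by (simp add: matrix_vector_mult_diff_distrib)
    also have "norm \<dots> \<le> norm (Pr *v x) * s k" unfolding s_def
      by (rule norm_linear_le_sum_basis[of "\<lambda>y. Pr *v orbit A y k"])
        (rule linear_compose[OF linear_orbit matrix_vector_mul_linear, unfolded o_def])
    finally show ?thesis by (simp add: mult.commute)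
  qed
  have s_nonneg: "0 \<le> s k" for k unfolding s_def by (simp add: sum_nonneg)
  have "s \<longlonglongrightarrow> 0"
    unfolding s_def by (intro tendsto_null_sum) (simp add: conv tendsto_norm_zero_iff)
  then obtain N where N: "\<And>k. k \<ge> N \<Longrightarrow> s k < 1/2"
    using LIMSEQ_D[of s 0 "1/2"] s_nonneg by auto
  obtain L where L: "\<And>k. s k \<le> L"
    using convergent_imp_Bseq[OF convergentI[OF \<open>s \<longlonglongrightarrow> 0\<close>]] s_nonneg by (auto simp: Bseq_def)
  show ?thesis
  proof (rule decays_exponentially_if_halving[where K = "Suc N" and L = L])
    show "norm (Pr *v orbit A x (Suc N)) \<le> norm (Pr *v x) / 2" for x
      using bound[of x "Suc N"] mult_right_mono[of "s (Suc N)" "1/2" "norm (Pr *v x)"] N[of "Suc N"]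
      by simp
    show "norm (Pr *v orbit A x j) \<le> L * norm (Pr *v x)" for x j
      using bound[of x j] mult_right_mono[OF L[of j], of "norm (Pr *v x)"] by simp
  qed simp_all
qed

end

lemma cond1_imp_cond2:
  assumes E: "subspace E" and "cond1 A E"
  shows "cond2 A E"
proof -
  obtain Pr where "perp_projector E Pr" using perp_projector_exists[OF E] .
  then interpret perp_projector E Pr .
  have "decays_exponentially (\<lambda>x. norm (Pr *v x)) A"
    using assms(2) proj_eq_0_iff unfolding cond1_def
    by (intro decays_if_orbit_tendsto_zero orbit_tendsto_zero_mod_invariant) auto
  then show ?thesis unfolding cond2_iff_decays using seminorm_norm_matrix seminorm_ker_norm_proj by blast
qed

lemma cond2_imp_cond1:
  assumes "cond2 A E"
  shows "cond1 A E"
proof -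
  obtain p where p: "seminorm p" "seminorm_ker p = E" "decays_exponentially p A"
    using assms unfolding cond2_iff_decays by blast
  obtain Pr where "perp_projector E Pr"
    using perp_projector_exists seminorm_ker_subspace[OF p(1)] p(2) by blast
  then interpret perp_projector E Pr .
  have "decays_exponentially (\<lambda>x. norm (Pr *v x)) A"
    using decays_exponentially_same_ker[OF p(1) seminorm_norm_matrix[of Pr]] p(2,3) seminorm_ker_norm_proj
    by simp
  then have "E_ge1 A \<subseteq> E" using decays_imp_E_ge1_subset proj_eq_0_iff by auto
  moreover have "\<forall>x\<in>E. A *v x \<in> E" using decays_exponentially_imp_invariant[OF p(1,3)] p(2) by blast
  ultimately show ?thesis unfolding cond1_def by blast
qed

theorem theorem2:
  fixes A :: "real^'n^'n" and E :: "(real^'n) set"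
  assumes "subspace E"
  shows "(cond1 A E \<longleftrightarrow> cond2 A E) \<and> (cond1 A E \<longleftrightarrow> cond3 A E)
       \<and> (cond1 A E \<longleftrightarrow> cond4 A E) \<and> (cond1 A E \<longleftrightarrow> cond5 A E)
       \<and> (subspace (E_ge1 A) \<and> cond1 A (E_ge1 A) \<and> (cond1 A E \<longrightarrow> E_ge1 A \<subseteq> E))"
proof -
  have 12: "cond1 A E \<longleftrightarrow> cond2 A E" using cond1_imp_cond2[OF assms] cond2_imp_cond1 by blast
  have 23: "cond2 A E \<longleftrightarrow> cond3 A E" using cond2_imp_cond3 cond3_imp_cond2[OF assms] by blast
  have 25: "cond2 A E \<longleftrightarrow> cond5 A E" and 24: "cond2 A E \<longleftrightarrow> cond4 A E"
    using cond2_imp_cond5 cond5_imp_cond4[OF assms] cond4_imp_cond2 by blast+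
  have "cond1 A (E_ge1 A)" unfolding cond1_def using E_ge1_invariant by blast
  then show ?thesis using 12 23 24 25 E_ge1_subspace unfolding cond1_def by blast
qed

end
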